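(* Let $X$ be a continuous random variable with probability density function $f$ whose support is the interval $(L,R)$, where $-\infty\le L<R\le\infty$, and suppose $f$ is continuous on $(L,R)$. Let $p$ be a real number in the interior of $\mathcal{D}=\{p\ge 1: E[|X|^{p-1}]<\infty\}$, let $\nu_p$ be the $p$-mean of $X$, and let $$H_p=\int_0^{\nu_p-L} y^{p-1} f(\nu_p-y)\,dy=\int_0^{R-\nu_p} y^{p-1} f(\nu_p+y)\,dy.$$ If a random variable with density $\frac{1}{H_p}y^{p-1}f(\nu_p+y)\mathbf{1}_{(0,R-\nu_p)}(y)$ exhibits strict stochastic dominance over a random variable with density $\frac{1}{H_p}y^{p-1}f(\nu_p-y)\mathbf{1}_{(0,\nu_p-L)}(y)$, then the function $q\mapsto\nu_q$ is increasing at $p$ (its derivative at $p$ is positive). Consequently, if this stochastic dominance holds for every $p$ in the interior of $\mathcal{D}$, then $X$ is truly positively skewed.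
   Context: For $p\ge 1$ and a continuous random variable $X$ with $E[|X|^{p-1}]<\infty$, the $p$-mean $\nu_p$ is the unique real solution $\nu$ of $E[(X-\nu)_+^{p-1}]=E[(\nu-X)_+^{p-1}]$ (for $p=1$ this is the median). The domain of $p\mapsto\nu_p$ is $\mathcal{D}=\{p\ge1:E[|X|^{p-1}]<\infty\}$. A random variable $Y$ with CDF $F_Y$ exhibits strict stochastic dominance over $Z$ with CDF $F_Z$ if $F_Z(x)\ge F_Y(x)$ for all $x$ and $F_Z\not\equiv F_Y$. $X$ is called truly positively skewed if $p\mapsto \nu_p$ is increasing on $\mathcal{D}$, provided the interior of $\mathcal{D}$ is nonempty. *)

theory Defs
  imports "HOL-Analysis.Analysis"
begin

text \<open>A continuous random variable X is represented by its Lebesgue density f.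
  Note: in Isabelle 0 powr 0 = 0, so (max (x - nu) 0) powr 0 is the indicator of x > nu,
  which is the intended meaning of (X - nu)_+^0 for p = 1 (median).\<close>

definition pdomain :: "(real \<Rightarrow> real) \<Rightarrow> real set" where
  "pdomain f = {p. p \<ge> 1 \<and> integrable lborel (\<lambda>x. \<bar>x\<bar> powr (p - 1) * f x)}"

definition pmean :: "(real \<Rightarrow> real) \<Rightarrow> real \<Rightarrow> real" where
  "pmean f p = (THE \<nu>. (\<integral>x. (max (x - \<nu>) 0) powr (p - 1) * f x \<partial>lborel)
                     = (\<integral>x. (max (\<nu> - x) 0) powr (p - 1) * f x \<partial>lborel))"

definition dens_cdf :: "(real \<Rightarrow> real) \<Rightarrow> real \<Rightarrow> real" where
  "dens_cdf g x = (\<integral>y. indicator {..x} y * g y \<partial>lborel)"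

definition strict_stoch_dom :: "(real \<Rightarrow> real) \<Rightarrow> (real \<Rightarrow> real) \<Rightarrow> bool" where
  "strict_stoch_dom gY gZ \<longleftrightarrow>
     (\<forall>x. dens_cdf gZ x \<ge> dens_cdf gY x) \<and> dens_cdf gZ \<noteq> dens_cdf gY"

definition truly_pos_skewed :: "(real \<Rightarrow> real) \<Rightarrow> bool" where
  "truly_pos_skewed f \<longleftrightarrow> interior (pdomain f) \<noteq> {} \<and> strict_mono_on (pdomain f) (pmean f)"

definition Hp :: "(real \<Rightarrow> real) \<Rightarrow> ereal \<Rightarrow> real \<Rightarrow> real" where
  "Hp f L p = (\<integral>y. indicator {y. 0 < y \<and> ereal y < ereal (pmean f p) - L} y
                   * y powr (p - 1) * f (pmean f p - y) \<partial>lborel)"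

definition dens_plus :: "(real \<Rightarrow> real) \<Rightarrow> ereal \<Rightarrow> ereal \<Rightarrow> real \<Rightarrow> real \<Rightarrow> real" where
  "dens_plus f L R p y = indicator {y. 0 < y \<and> ereal y < R - ereal (pmean f p)} y
        * (y powr (p - 1) * f (pmean f p + y) / Hp f L p)"

definition dens_minus :: "(real \<Rightarrow> real) \<Rightarrow> ereal \<Rightarrow> real \<Rightarrow> real \<Rightarrow> real" where
  "dens_minus f L p y = indicator {y. 0 < y \<and> ereal y < ereal (pmean f p) - L} y
        * (y powr (p - 1) * f (pmean f p - y) / Hp f L p)"

end

theory Submission
  imports Defs
begin

(* The p-mean \<nu>(q) is the unique zero of the moment balance
     G(\<nu>, q) = E (X - \<nu>)\<^sub>+^(q-1) - E (\<nu> - X)\<^sub>+^(q-1),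
   which is strictly decreasing in \<nu> across the support. Implicit differentiation gives
   \<nu>'(p) = - (\<partial>G/\<partial>q) / (\<partial>G/\<partial>\<nu>) at \<nu> = \<nu>(p). Here \<partial>G/\<partial>\<nu> = -(p-1) E |X - \<nu>|^(p-2) < 0, the
   singular kernel being integrable because f is bounded near \<nu>, and
     \<partial>G/\<partial>q = E (X - \<nu>)\<^sub>+^(p-1) ln (X - \<nu>) - E (\<nu> - X)\<^sub>+^(p-1) ln (\<nu> - X) = H\<^sub>p (E ln Y - E ln Z)
   for the two half-densities Y, Z of the statement. The layer-cake formula
   E ln Y - E ln Z = \<integral>\<^sub>0^\<infinity> (F\<^sub>Z t - F\<^sub>Y t) / t dt turns strict stochastic dominance into
   \<partial>G/\<partial>q > 0. A positive derivative on the interior of the domain, together with continuity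
   of q \<mapsto> \<nu>(q) on the whole interval, gives strict monotonicity.
   Lower partial moments are handled as upper partial moments of the reflected density
   x \<mapsto> f (- x), and every differentiation under the integral sign is dominated convergence. *)

lemma powr_le_powr_add_powr:
  fixes u s s0 t :: real
  assumes "0 < u" "s0 \<le> s" "s \<le> t"
  shows "u powr s \<le> u powr s0 + u powr t"
proof (cases "u \<le> 1")
  case True
  then have "u powr s \<le> u powr s0" using assms by (intro powr_mono') auto
  then show ?thesis using powr_ge_zero[of u t] by linarith
next
  case False
  then have "u powr s \<le> u powr t" using assms by (intro powr_mono) auto
  then show ?thesis using powr_ge_zero[of u s0] by linarith
qed

lemma powr_le_1_add_powr:
  fixes u s t :: real
  assumes "0 \<le> u" "0 \<le> s" "s \<le> t"
  shows "u powr s \<le> 1 + u powr t"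
  using powr_le_powr_add_powr[of u 0 s t] assms by (cases "u = 0") auto

lemma abs_diff_powr_le:
  fixes x c r :: real
  assumes "0 \<le> r"
  shows "\<bar>x - c\<bar> powr r \<le> 2 powr r * (\<bar>x\<bar> powr r + \<bar>c\<bar> powr r)"
proof -
  have "\<bar>x - c\<bar> powr r \<le> (2 * max \<bar>x\<bar> \<bar>c\<bar>) powr r"
    using assms by (intro powr_mono2) auto
  also have "\<dots> = 2 powr r * max \<bar>x\<bar> \<bar>c\<bar> powr r"
    by (simp add: powr_mult)
  also have "max \<bar>x\<bar> \<bar>c\<bar> powr r \<le> \<bar>x\<bar> powr r + \<bar>c\<bar> powr r"
    by (simp add: max_def)
  finally show ?thesis by simp
qed

lemma powr_le_two_powr_abs_mult:
  fixes u \<xi> s :: real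
  assumes "0 < u" "u / 2 \<le> \<xi>" "\<xi> \<le> 2 * u"
  shows "\<xi> powr s \<le> 2 powr \<bar>s\<bar> * u powr s"
proof -
  have \<xi>: "\<xi> = (\<xi> / u) * u" "0 < \<xi> / u" using assms by auto
  have "(\<xi> / u) powr s \<le> 2 powr \<bar>s\<bar>"
  proof (cases "0 \<le> s")
    case True
    have "(\<xi> / u) powr s \<le> 2 powr s" using True assms \<xi>(2) by (intro powr_mono2) (auto simp: field_simps)
    then show ?thesis using True by simp
  next
    case False
    have "(\<xi> / u) powr s \<le> (1 / 2) powr s" using False assms by (intro powr_mono2') (auto simp: field_simps)
    then show ?thesis using False by (simp add: powr_divide powr_minus_divide)
  qed
  then have "(\<xi> / u) powr s * u powr s \<le> 2 powr \<bar>s\<bar> * u powr s" by (simp add: mult_right_mono)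
  then show ?thesis using \<xi> assms(1) by (metis powr_mult less_imp_le)
qed

lemma abs_powr_mult_ln_le:
  fixes u \<xi> a b e :: real
  assumes u: "0 < u" and e: "0 < e" and \<xi>: "a + e \<le> \<xi>" "\<xi> \<le> b - e"
  shows "\<bar>u powr (\<xi> - 1) * ln u\<bar> \<le> (u powr (a - 1) + u powr (b - 1)) / e"
proof (cases "u \<le> 1")
  case True
  have "ln (u powr - e) \<le> u powr - e - 1" using u by (intro ln_le_minus_one) simp
  then have "e * - ln u \<le> u powr - e" using u by (simp add: ln_powr)
  then have "u powr e * - ln u \<le> 1 / e" using u e by (simp add: field_simps powr_minus)
  moreover have "u powr (\<xi> - 1) \<le> u powr (a - 1) * u powr e"
    using True u \<xi> by (simp add: powr_add[symmetric] powr_mono')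
  ultimately have "u powr (\<xi> - 1) * - ln u \<le> u powr (a - 1) * (1 / e)"
    using True u by (smt (verit) mult.assoc mult_left_mono mult_right_mono ln_le_zero_iff powr_ge_zero)
  moreover have "u powr (a - 1) / e \<le> (u powr (a - 1) + u powr (b - 1)) / e"
    using e by (intro divide_right_mono) auto
  ultimately show ?thesis using True u by (simp add: abs_mult)
next
  case False
  have "ln u \<le> u powr e / e" using False e by (intro ln_powr_bound) auto
  moreover have "u powr (\<xi> - 1) \<le> u powr (b - 1 - e)" using False \<xi> by (intro powr_mono) auto
  ultimately have "u powr (\<xi> - 1) * ln u \<le> u powr (b - 1 - e) * (u powr e / e)"
    using False by (intro mult_mono) auto
  also have "\<dots> = u powr (b - 1) / e" using u by (simp add: powr_add[symmetric])
  also have "\<dots> \<le> (u powr (a - 1) + u powr (b - 1)) / e"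
    using e by (intro divide_right_mono) auto
  finally show ?thesis using False by (simp add: abs_mult)
qed

definition pos_powr_ln :: "real \<Rightarrow> real \<Rightarrow> real" where
  "pos_powr_ln p u = (if 0 < u then u powr (p - 1) * ln u else 0)"

lemma measurable_pos_powr_ln [measurable]: "pos_powr_ln p \<in> borel_measurable borel"
  unfolding pos_powr_ln_def by measurable

lemma powr_exponent_quotient_mvt:
  fixes u p q :: real
  assumes "0 < u" "q \<noteq> p"
  obtains \<xi> where "\<bar>\<xi> - p\<bar> \<le> \<bar>q - p\<bar>" "(u powr (q - 1) - u powr (p - 1)) / (q - p) = u powr (\<xi> - 1) * ln u"
proof -
  have deriv: "((\<lambda>t. u powr (t - 1)) has_real_derivative u powr (t - 1) * ln u) (at t)" for t
    using assms(1) by (auto intro!: derivative_eq_intros)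
  consider "p < q" | "q < p" using assms(2) by linarith
  then show ?thesis
  proof cases
    case 1
    then obtain \<xi> where "p < \<xi>" "\<xi> < q"
      "u powr (q - 1) - u powr (p - 1) = (q - p) * (u powr (\<xi> - 1) * ln u)"
      using MVT2[of p q "\<lambda>t. u powr (t - 1)" "\<lambda>t. u powr (t - 1) * ln u"] deriv by auto
    then show ?thesis using that[of \<xi>] by auto
  next
    case 2
    then obtain \<xi> where "q < \<xi>" "\<xi> < p"
      "u powr (p - 1) - u powr (q - 1) = (p - q) * (u powr (\<xi> - 1) * ln u)"
      using MVT2[of q p "\<lambda>t. u powr (t - 1)" "\<lambda>t. u powr (t - 1) * ln u"] deriv by auto
    then show ?thesis using that[of \<xi>] by (auto simp: field_simps)
  qed
qed

lemma abs_pos_part_powr_exponent_quotient_le: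
  fixes u p q e :: real
  assumes "q \<noteq> p" "\<bar>q - p\<bar> \<le> e"
  shows "\<bar>(max u 0 powr (q - 1) - max u 0 powr (p - 1)) / (q - p)\<bar>
    \<le> (\<bar>u\<bar> powr (p - 2 * e - 1) + \<bar>u\<bar> powr (p + 2 * e - 1)) / e"
proof (cases "0 < u")
  case True
  obtain \<xi> where \<xi>: "\<bar>\<xi> - p\<bar> \<le> \<bar>q - p\<bar>" "(u powr (q - 1) - u powr (p - 1)) / (q - p) = u powr (\<xi> - 1) * ln u"
    using powr_exponent_quotient_mvt[OF True assms(1)] .
  have "0 < e" using assms by linarith
  then show ?thesis using True \<xi> assms(2) by (auto intro!: abs_powr_mult_ln_le)
next
  case False
  then show ?thesis using assms by auto
qed

lemma pos_part_powr_has_derivative_exponent: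
  "((\<lambda>q. max u 0 powr (q - 1)) has_real_derivative pos_powr_ln p u) (at p)"
proof (cases "0 < u")
  case True
  then show ?thesis unfolding pos_powr_ln_def by (auto intro!: derivative_eq_intros)
next
  case False
  then show ?thesis unfolding pos_powr_ln_def by simp
qed

\<comment> \<open>For \<open>u \<noteq> 0\<close> the value at \<open>\<Delta> = 0\<close> is the limit of the difference quotient.\<close>
definition shift_quotient :: "real \<Rightarrow> real \<Rightarrow> real \<Rightarrow> real" where
  "shift_quotient q \<Delta> u =
    (if \<Delta> = 0 then - (q - 1) * (if 0 < u then u powr (q - 2) else 0)
     else (max (u - \<Delta>) 0 powr (q - 1) - max u 0 powr (q - 1)) / \<Delta>)"

lemma measurable_shift_quotient [measurable]:
  "(\<lambda>x. shift_quotient (q x) (\<Delta> x) (u x)) \<in> borel_measurable borel"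
  if [measurable]: "q \<in> borel_measurable borel" "\<Delta> \<in> borel_measurable borel" "u \<in> borel_measurable borel"
  unfolding shift_quotient_def by measurable

lemma shift_quotient_mvt:
  assumes u: "0 < u" and \<Delta>: "\<bar>\<Delta>\<bar> \<le> u / 2"
  obtains \<xi> where "\<bar>\<xi> - u\<bar> \<le> \<bar>\<Delta>\<bar>" "shift_quotient q \<Delta> u = - (q - 1) * \<xi> powr (q - 2)"
proof -
  have deriv: "0 < v \<Longrightarrow> ((\<lambda>v. v powr (q - 1)) has_real_derivative (q - 1) * v powr (q - 2)) (at v)" for v
    using has_real_derivative_powr[of v "q - 1"] by (simp add: algebra_simps)
  consider "\<Delta> = 0" | "0 < \<Delta>" | "\<Delta> < 0" by linarith
  then show ?thesis
  proof cases
    case 1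
    then show ?thesis using u that[of u] unfolding shift_quotient_def by auto
  next
    case 2
    then obtain \<xi> where "u - \<Delta> < \<xi>" "\<xi> < u"
      "u powr (q - 1) - (u - \<Delta>) powr (q - 1) = (u - (u - \<Delta>)) * ((q - 1) * \<xi> powr (q - 2))"
      using MVT2[of "u - \<Delta>" u "\<lambda>v. v powr (q - 1)" "\<lambda>v. (q - 1) * v powr (q - 2)"] deriv \<Delta> by force
    then show ?thesis using 2 \<Delta> that[of \<xi>] unfolding shift_quotient_def by (auto simp: field_simps)
  next
    case 3
    then obtain \<xi> where "u < \<xi>" "\<xi> < u - \<Delta>"
      "(u - \<Delta>) powr (q - 1) - u powr (q - 1) = (u - \<Delta> - u) * ((q - 1) * \<xi> powr (q - 2))"
      using MVT2[of u "u - \<Delta>" "\<lambda>v. v powr (q - 1)" "\<lambda>v. (q - 1) * v powr (q - 2)"] deriv u by force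
    then show ?thesis using 3 \<Delta> u that[of \<xi>] unfolding shift_quotient_def by (auto simp: field_simps)
  qed
qed

lemma shift_quotient_eq_0:
  assumes "u < 0" "\<bar>\<Delta>\<bar> \<le> - u"
  shows "shift_quotient q \<Delta> u = 0"
  using assms unfolding shift_quotient_def by auto

lemma tendsto_shift_quotient:
  assumes "u \<noteq> 0"
  shows "((\<lambda>z. shift_quotient (snd z) (fst z) u) \<longlongrightarrow> shift_quotient p 0 u) (at (0, p))"
proof -
  have \<Delta>: "((\<lambda>z. \<bar>fst z\<bar>) \<longlongrightarrow> 0) (at (0::real, p))"
    by (auto intro!: tendsto_eq_intros)
  have small: "\<forall>\<^sub>F z in at (0, p). \<bar>fst z\<bar> < \<bar>u\<bar> / 2"
    using order_tendstoD(2)[OF \<Delta>, of "\<bar>u\<bar> / 2"] assms by simp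
  show ?thesis
  proof (cases "0 < u")
    case True
    have "\<forall>z. \<exists>\<xi>. \<bar>fst z\<bar> \<le> u / 2 \<longrightarrow>
        \<bar>\<xi> - u\<bar> \<le> \<bar>fst z\<bar> \<and> shift_quotient (snd z) (fst z) u = - (snd z - 1) * \<xi> powr (snd z - 2)"
    proof
      fix z :: "real \<times> real"
      show "\<exists>\<xi>. \<bar>fst z\<bar> \<le> u / 2 \<longrightarrow>
          \<bar>\<xi> - u\<bar> \<le> \<bar>fst z\<bar> \<and> shift_quotient (snd z) (fst z) u = - (snd z - 1) * \<xi> powr (snd z - 2)"
        using shift_quotient_mvt[OF True, of "fst z" "snd z"] by blast
    qed
    from choice[OF this] obtain \<xi> where \<xi>: "\<And>z. \<bar>fst z\<bar> \<le> u / 2 \<Longrightarrow>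
        \<bar>\<xi> z - u\<bar> \<le> \<bar>fst z\<bar> \<and> shift_quotient (snd z) (fst z) u = - (snd z - 1) * \<xi> z powr (snd z - 2)"
      by blast
    have "((\<lambda>z. \<xi> z - u) \<longlongrightarrow> 0) (at (0, p))"
      using small \<xi> True by (intro Lim_null_comparison[OF _ \<Delta>]) (auto elim!: eventually_mono)
    then have "(\<xi> \<longlongrightarrow> u) (at (0, p))" by (rule LIM_zero_cancel)
    moreover have "(snd \<longlongrightarrow> p) (at (0::real, p))"
      using tendsto_snd[OF tendsto_ident_at[of "(0::real, p)" UNIV]] by simp
    ultimately have "((\<lambda>z. - (snd z - 1) * \<xi> z powr (snd z - 2)) \<longlongrightarrow> - (p - 1) * u powr (p - 2)) (at (0, p))"
      using True by (auto intro!: tendsto_intros)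
    moreover have "\<forall>\<^sub>F z in at (0, p). shift_quotient (snd z) (fst z) u = - (snd z - 1) * \<xi> z powr (snd z - 2)"
      using small \<xi> True by (auto elim!: eventually_mono)
    ultimately show ?thesis
      using True unfolding shift_quotient_def[of p 0] by (simp add: tendsto_cong)
  next
    case False
    have "\<forall>\<^sub>F z in at (0, p). shift_quotient (snd z) (fst z) u = 0"
      using small by eventually_elim (use False assms in \<open>auto intro!: shift_quotient_eq_0\<close>)
    then show ?thesis
      using False unfolding shift_quotient_def[of p 0] by (simp add: tendsto_eventually)
  qed
qed

lemma abs_shift_quotient_le_near:
  assumes "1 \<le> q" "\<bar>\<Delta>\<bar> \<le> \<bar>u\<bar> / 2"
  shows "\<bar>shift_quotient q \<Delta> u\<bar> \<le> (q - 1) * (2 powr \<bar>q - 2\<bar> * \<bar>u\<bar> powr (q - 2))"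
proof (cases "0 < u")
  case True
  obtain \<xi> where \<xi>: "\<bar>\<xi> - u\<bar> \<le> \<bar>\<Delta>\<bar>" "shift_quotient q \<Delta> u = - (q - 1) * \<xi> powr (q - 2)"
    using shift_quotient_mvt[OF True] assms(2) True by auto
  have "\<xi> powr (q - 2) \<le> 2 powr \<bar>q - 2\<bar> * u powr (q - 2)"
    using \<xi>(1) assms(2) True by (intro powr_le_two_powr_abs_mult) auto
  then show ?thesis using \<xi>(2) True assms(1) by (simp add: abs_mult mult_left_mono)
next
  case False
  then have "shift_quotient q \<Delta> u = 0"
    using assms(2) by (cases "u = 0") (auto simp: shift_quotient_def intro: shift_quotient_eq_0)
  then show ?thesis using assms(1) by simp
qed

lemma abs_shift_quotient_le_far:
  assumes q: "1 \<le> q" and u: "u \<noteq> 0" and \<Delta>: "\<bar>u\<bar> / 2 < \<bar>\<Delta>\<bar>" "\<bar>\<Delta>\<bar> \<le> 1"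
  shows "\<bar>shift_quotient q \<Delta> u\<bar> \<le> 3 powr (q - 1) * (1 + 2 * \<bar>u\<bar> powr (q - 2))"
proof -
  have \<Delta>0: "0 < \<bar>\<Delta>\<bar>" using \<Delta>(1) by linarith
  have bound: "max v 0 powr (q - 1) \<le> (3 * \<bar>\<Delta>\<bar>) powr (q - 1)" if "\<bar>v\<bar> \<le> 3 * \<bar>\<Delta>\<bar>" for v
    using that q by (intro powr_mono2) auto
  have "\<bar>u - \<Delta>\<bar> \<le> 3 * \<bar>\<Delta>\<bar>" "\<bar>u\<bar> \<le> 3 * \<bar>\<Delta>\<bar>" using \<Delta>(1) by linarith+
  then have "\<bar>max (u - \<Delta>) 0 powr (q - 1) - max u 0 powr (q - 1)\<bar> \<le> (3 * \<bar>\<Delta>\<bar>) powr (q - 1)"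
    using bound[of "u - \<Delta>"] bound[of u] powr_ge_zero[of "max (u - \<Delta>) 0" "q - 1"]
      powr_ge_zero[of "max u 0" "q - 1"]
    unfolding abs_le_iff by linarith
  also have "\<dots> = 3 powr (q - 1) * \<bar>\<Delta>\<bar> powr (q - 2) * \<bar>\<Delta>\<bar>"
    using powr_add[of "\<bar>\<Delta>\<bar>" "q - 2" 1] \<Delta>0 by (simp add: powr_mult)
  finally have "\<bar>shift_quotient q \<Delta> u\<bar> \<le> 3 powr (q - 1) * \<bar>\<Delta>\<bar> powr (q - 2)"
    using \<Delta>0 by (simp add: shift_quotient_def abs_divide divide_le_eq)
  moreover have "\<bar>\<Delta>\<bar> powr (q - 2) \<le> 1 + 2 * \<bar>u\<bar> powr (q - 2)"
  proof (cases "2 \<le> q")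
    case True
    then have "\<bar>\<Delta>\<bar> powr (q - 2) \<le> 1" using \<Delta> by (intro powr_le1) auto
    then show ?thesis using powr_ge_zero[of "\<bar>u\<bar>" "q - 2"] by linarith
  next
    case False
    have "\<bar>\<Delta>\<bar> powr (q - 2) \<le> (\<bar>u\<bar> / 2) powr (q - 2)"
      using False \<Delta>(1) u by (intro powr_mono2') auto
    also have "\<dots> = 2 powr (2 - q) * \<bar>u\<bar> powr (q - 2)"
      by (simp add: powr_divide powr_minus_divide powr_diff)
    also have "\<dots> \<le> 2 powr 1 * \<bar>u\<bar> powr (q - 2)" using False q by (intro mult_right_mono powr_mono) auto
    finally show ?thesis by simp
  qed
  ultimately show ?thesis by (smt (verit) mult_left_mono powr_ge_zero)
qed

\<comment> \<open>The constant is crude; it only matters that it does not depend on \<open>q\<close>, \<open>\<Delta>\<close> and \<open>u\<close>.\<close>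
lemma abs_shift_quotient_le:
  fixes a b q \<Delta> u :: real
  assumes q: "1 < a" "a \<le> q" "q \<le> b" and u: "u \<noteq> 0" and \<Delta>: "\<bar>\<Delta>\<bar> \<le> 1"
  shows "\<bar>shift_quotient q \<Delta> u\<bar> \<le> 3 * b * 6 powr b * (\<bar>u\<bar> powr min (a - 2) 0 + \<bar>u\<bar> powr (b - 1))"
proof -
  define S where "S = \<bar>u\<bar> powr min (a - 2) 0 + \<bar>u\<bar> powr (b - 1)"
  have S: "\<bar>u\<bar> powr s \<le> S" if "min (a - 2) 0 \<le> s" "s \<le> b - 1" for s
    unfolding S_def using u that by (intro powr_le_powr_add_powr) auto
  have S1: "1 \<le> S" and Sq: "\<bar>u\<bar> powr (q - 2) \<le> S" using S[of 0] S[of "q - 2"] q u by auto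
  have "2 powr \<bar>q - 2\<bar> \<le> 2 powr b" "3 powr (q - 1) \<le> 3 powr b" "2 powr b \<le> 6 powr b" "3 powr b \<le> 6 powr b"
    using q by (auto intro!: powr_mono powr_mono2)
  then have six: "2 powr \<bar>q - 2\<bar> \<le> 6 powr b" "3 powr (q - 1) \<le> 6 powr b" by linarith+
  have "\<bar>shift_quotient q \<Delta> u\<bar> \<le> b * (6 powr b * (3 * S))"
  proof (cases "\<bar>\<Delta>\<bar> \<le> \<bar>u\<bar> / 2")
    case True
    have "\<bar>shift_quotient q \<Delta> u\<bar> \<le> (q - 1) * (2 powr \<bar>q - 2\<bar> * \<bar>u\<bar> powr (q - 2))"
      using True q by (intro abs_shift_quotient_le_near) auto
    also have "\<dots> \<le> b * (6 powr b * (3 * S))"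
      using q six Sq S1 by (intro mult_mono) auto
    finally show ?thesis .
  next
    case False
    have "\<bar>shift_quotient q \<Delta> u\<bar> \<le> 3 powr (q - 1) * (1 + 2 * \<bar>u\<bar> powr (q - 2))"
      using False q u \<Delta> by (intro abs_shift_quotient_le_far) auto
    also have "\<dots> \<le> 6 powr b * (3 * S)"
      using six(2) S1 Sq by (intro mult_mono) auto
    also have "\<dots> \<le> b * (6 powr b * (3 * S))"
      using q S1 mult_right_mono[of 1 b "6 powr b * (3 * S)"] by simp
    finally show ?thesis .
  qed
  then show ?thesis unfolding S_def[symmetric] by (simp add: mult_ac)
qed

lemma isCont_bounded_above_near:
  fixes f :: "real \<Rightarrow> real"
  assumes "isCont f c"
  obtains r where "0 < r" "\<And>x. \<bar>x - c\<bar> < r \<Longrightarrow> f x \<le> f c + 1"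
proof -
  have "\<forall>\<^sub>F x in at c. f x < f c + 1"
    using assms unfolding continuous_at by (rule order_tendstoD) simp
  then obtain r where "0 < r" "\<And>x. x \<noteq> c \<Longrightarrow> \<bar>x - c\<bar> < r \<Longrightarrow> f x < f c + 1"
    unfolding eventually_at dist_real_def by auto
  then show ?thesis using that[of r] by (metis less_eq_real_def less_add_one)
qed

lemma eventually_at_within_bounded_above:
  fixes e :: real
  assumes "e \<in> S"
  obtains M where "M \<in> S" "\<forall>\<^sub>F q in at e within S. q \<le> M"
proof (cases "\<exists>M\<in>S. e < M")
  case True
  then obtain M where M: "M \<in> S" "e < M" by blast
  have "\<forall>\<^sub>F q in at e within S. q \<le> M"
    using order_tendstoD(2)[OF tendsto_ident_at M(2)] by eventually_elim simp
  with M(1) show ?thesis by (rule that)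
next
  case False
  then have "\<forall>\<^sub>F q in at e within S. q \<le> e"
    by (auto simp: eventually_at_filter not_less)
  with assms show ?thesis by (rule that)
qed

lemma open_ereal_between: "open {x::real. L < ereal x \<and> ereal x < R}"
  by (intro open_Collect_conj open_Collect_less continuous_intros)

lemma ereal_less_minus_iff: "ereal y < ereal \<nu> - L \<longleftrightarrow> L < ereal (\<nu> - y)"
  by (cases L) auto

lemma ereal_less_minus_iff': "ereal y < R - ereal \<nu> \<longleftrightarrow> ereal (\<nu> + y) < R"
  by (cases R) auto

lemma eventually_at_within_self: "\<forall>\<^sub>F x in at a within S. x \<in> S"
  by (simp add: eventually_at_filter)

lemma tendsto_pos_part_powr:
  fixes Y g :: "'a \<Rightarrow> real"
  assumes "(Y \<longlongrightarrow> y) F" "y \<noteq> 0" "(g \<longlongrightarrow> r) F"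
  shows "((\<lambda>t. max (Y t) 0 powr g t) \<longlongrightarrow> max y 0 powr r) F"
proof (cases "0 < y")
  case True
  then show ?thesis using assms by (intro tendsto_powr tendsto_max tendsto_const) auto
next
  case False
  then have "\<forall>\<^sub>F t in F. Y t < 0" using order_tendstoD(2)[OF assms(1)] assms(2) by simp
  then have "\<forall>\<^sub>F t in F. max (Y t) 0 powr g t = max y 0 powr r"
    by eventually_elim (use False in auto)
  then show ?thesis by (rule tendsto_eventually)
qed

lemma tendsto_integral_dominated:
  fixes s :: "'a::first_countable_topology \<Rightarrow> real \<Rightarrow> real" and g w :: "real \<Rightarrow> real"
  assumes [measurable]: "\<And>t. s t \<in> borel_measurable borel" "g \<in> borel_measurable borel"
    and "integrable lborel w"
    and lim: "AE x in lborel. ((\<lambda>t. s t x) \<longlongrightarrow> g x) (at t0 within S)"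
    and bound: "\<forall>\<^sub>F t in at t0 within S. AE x in lborel. norm (s t x) \<le> w x"
  shows "((\<lambda>t. \<integral>x. s t x \<partial>lborel) \<longlongrightarrow> (\<integral>x. g x \<partial>lborel)) (at t0 within S)"
  unfolding tendsto_at_iff_sequentially comp_def
proof (intro allI impI)
  fix X assume "\<forall>i. X i \<in> S - {t0}" "X \<longlonglongrightarrow> t0"
  then have X: "filterlim X (at t0 within S) sequentially" by (auto simp: filterlim_at)
  from filterlim_iff[THEN iffD1, OF X, rule_format, OF bound]
  obtain N where N: "\<And>n. N \<le> n \<Longrightarrow> AE x in lborel. norm (s (X n) x) \<le> w x"
    by (auto simp: eventually_sequentially)
  show "(\<lambda>n. \<integral>x. s (X n) x \<partial>lborel) \<longlonglongrightarrow> (\<integral>x. g x \<partial>lborel)"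
  proof (rule LIMSEQ_offset, rule integral_dominated_convergence)
    show "AE x in lborel. (\<lambda>n. s (X (n + N)) x) \<longlonglongrightarrow> g x"
      using lim by eventually_elim (intro LIMSEQ_ignore_initial_segment filterlim_compose[OF _ X])
    show "AE x in lborel. norm (s (X (n + N)) x) \<le> w x" for n using N[of "n + N"] by simp
  qed (use assms in auto)
qed

lemma integral_pos_if_bounded_below_on_interval:
  fixes h :: "real \<Rightarrow> real"
  assumes "integrable lborel h" "\<And>x. 0 \<le> h x" "a < b" "0 < c" "\<And>x. x \<in> {a..b} \<Longrightarrow> c \<le> h x"
  shows "0 < (\<integral>x. h x \<partial>lborel)"
proof -
  have "0 < (\<integral>x. c * indicator {a..b} x \<partial>lborel)"
    using assms by simp
  also have "\<dots> \<le> (\<integral>x. h x \<partial>lborel)"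
  proof (rule integral_mono)
    show "integrable lborel (\<lambda>x. c * indicator {a..b} x)"
      by (intro integrable_mult_right integrable_real_indicator) (auto simp: emeasure_lborel_Icc_eq)
  qed (use assms in \<open>auto simp: indicator_def\<close>)
  finally show ?thesis .
qed

lemma integrable_indicator_powr_from_0:
  fixes s r :: real
  assumes "-1 < s" "0 \<le> r"
  shows "integrable lborel (\<lambda>y. indicator {0..r} y * y powr s)"
proof -
  have "(\<lambda>y. y powr s) absolutely_integrable_on {0..r}"
    using assms by (intro nonnegative_absolutely_integrable_1 integrable_on_powr_from_0) auto
  then have "integrable lborel (\<lambda>y. indicator {0..r} y *\<^sub>R y powr s)"
    unfolding set_integrable_def by (subst (asm) integrable_completion) measurable
  then show ?thesis by simp
qed

\<comment> \<open>Joint continuity of the difference quotient \<open>Q\<close> at \<open>(0, p)\<close> replaces the usual \<open>C\<^sup>1\<close> hypothesis.\<close>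
lemma has_real_derivative_implicit:
  fixes G Q :: "real \<Rightarrow> real \<Rightarrow> real" and m :: "real \<Rightarrow> real"
  assumes root: "\<forall>\<^sub>F q in nhds p. G (m q) q = 0"
    and m: "isCont m p"
    and G_order: "((\<lambda>q. G (m p) q) has_real_derivative P) (at p)"
    and G_shift: "\<forall>\<^sub>F q in nhds p. \<forall>\<Delta>. G (m p + \<Delta>) q - G (m p) q = \<Delta> * Q \<Delta> q"
    and Q: "isCont (\<lambda>z. Q (fst z) (snd z)) (0, p)"
    and D: "Q 0 p \<noteq> 0"
  shows "(m has_real_derivative - P / Q 0 p) (at p)"
proof -
  have "((\<lambda>q. (m q - m p, q)) \<longlongrightarrow> (0, p)) (at p)"
    using m unfolding continuous_at by (auto intro!: tendsto_eq_intros)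
  from isCont_tendsto_compose[OF Q this]
  have Q_lim: "((\<lambda>q. Q (m q - m p) q) \<longlongrightarrow> Q 0 p) (at p)" by simp
  have P_lim: "((\<lambda>q. (G (m p) q - G (m p) p) / (q - p)) \<longlongrightarrow> P) (at p)"
    using G_order by (simp add: has_field_derivative_iff)
  have Gp: "G (m p) p = 0" using eventually_nhds_x_imp_x[OF root] .
  have "\<forall>\<^sub>F q in at p. q \<noteq> p \<and> G (m q) q = 0 \<and> (\<forall>\<Delta>. G (m p + \<Delta>) q - G (m p) q = \<Delta> * Q \<Delta> q)"
    using root G_shift unfolding eventually_at_filter by eventually_elim auto
  moreover have "\<forall>\<^sub>F q in at p. Q (m q - m p) q \<noteq> 0"
    using tendsto_imp_eventually_ne[OF Q_lim D] .
  ultimately have "\<forall>\<^sub>F q in at p. (m q - m p) / (q - p) = - ((G (m p) q - G (m p) p) / (q - p)) / Q (m q - m p) q"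
  proof eventually_elim
    case (elim q)
    then have eq: "(m q - m p) * Q (m q - m p) q = - (G (m p) q - G (m p) p)"
      using Gp spec[OF conjunct2[OF conjunct2[OF elim(1)]], of "m q - m p"] by simp
    have "- ((G (m p) q - G (m p) p) / (q - p)) / Q (m q - m p) q
        = (m q - m p) * Q (m q - m p) q / (q - p) / Q (m q - m p) q"
      unfolding eq by (simp add: minus_divide_left)
    then show ?case using elim by simp
  qed
  moreover have "((\<lambda>q. - ((G (m p) q - G (m p) p) / (q - p)) / Q (m q - m p) q) \<longlongrightarrow> - P / Q 0 p) (at p)"
    using P_lim Q_lim D by (intro tendsto_intros) auto
  ultimately show ?thesis
    unfolding has_field_derivative_iff by (rule tendsto_cong[THEN iffD2])
qed

lemma strict_mono_on_if_has_real_derivative_pos: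
  fixes g :: "real \<Rightarrow> real" and S :: "real set"
  assumes S: "is_interval S" and g: "continuous_on S g"
    and deriv: "\<And>x. x \<in> interior S \<Longrightarrow> \<exists>d>0. (g has_real_derivative d) (at x)"
  shows "strict_mono_on S g"
proof (rule strict_mono_onI)
  fix a b assume ab: "a \<in> S" "b \<in> S" "a < b"
  have sub: "{a..b} \<subseteq> S"
    using is_interval_1[THEN iffD1, OF S, rule_format, of a b] ab by auto
  have "{a<..<b} \<subseteq> interior S" using sub by (intro interior_maximal) auto
  show "g a < g b"
  proof (rule DERIV_pos_imp_increasing_open[OF ab(3)])
    show "\<exists>d. (g has_real_derivative d) (at x) \<and> 0 < d" if "a < x" "x < b" for x
    proof -
      have "x \<in> interior S" using that \<open>{a<..<b} \<subseteq> interior S\<close> by auto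
      then show ?thesis using deriv by blast
    qed
    show "continuous_on {a..b} g" using continuous_on_subset[OF g sub] .
  qed
qed

section \<open>Logarithmic expectations and stochastic dominance\<close>

lemma nn_integral_inverse_Ico:
  fixes \<alpha> \<beta> :: real
  assumes "0 < \<alpha>" "\<alpha> \<le> \<beta>"
  shows "(\<integral>\<^sup>+t. ennreal (indicator {\<alpha>..<\<beta>} t / t) \<partial>lborel) = ennreal (ln \<beta> - ln \<alpha>)"
proof -
  have "(\<integral>\<^sup>+t. ennreal (indicator {\<alpha>..<\<beta>} t / t) \<partial>lborel)
      = (\<integral>\<^sup>+t. ennreal (indicator {\<alpha>..\<beta>} t * (1 / t)) \<partial>lborel)"
    using AE_lborel_singleton[of \<beta>] by (intro nn_integral_cong_AE) (auto elim!: eventually_mono simp: indicator_def)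
  also have "\<dots> = ennreal (ln \<beta> - ln \<alpha>)"
  proof (rule nn_integral_has_integral_lebesgue)
    show "((\<lambda>t. 1 / t) has_integral (ln \<beta> - ln \<alpha>)) {\<alpha>..\<beta>}"
      using assms by (intro fundamental_theorem_of_calculus)
        (auto intro!: derivative_eq_intros simp: has_real_derivative_iff_has_vector_derivative[symmetric])
  qed (use assms in auto)
  finally show ?thesis .
qed

lemma integrable_integral_eq_if_nn_integral_eq:
  fixes h k :: "real \<Rightarrow> real"
  assumes h: "integrable lborel h" "\<And>y. 0 \<le> h y"
    and k[measurable]: "k \<in> borel_measurable borel" "\<And>t. 0 \<le> k t"
    and eq: "(\<integral>\<^sup>+y. ennreal (h y) \<partial>lborel) = (\<integral>\<^sup>+t. ennreal (k t) \<partial>lborel)"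
  shows "integrable lborel k" "(\<integral>t. k t \<partial>lborel) = (\<integral>y. h y \<partial>lborel)"
proof -
  have h_nn: "(\<integral>\<^sup>+y. ennreal (h y) \<partial>lborel) = ennreal (\<integral>y. h y \<partial>lborel)"
    using h by (intro nn_integral_eq_integral) auto
  show ik: "integrable lborel k"
    using k(2) by (intro integrableI_nonneg) (auto simp: eq[symmetric] h_nn)
  have "ennreal (\<integral>t. k t \<partial>lborel) = ennreal (\<integral>y. h y \<partial>lborel)"
    using ik k(2) eq h_nn by (subst nn_integral_eq_integral[symmetric]) auto
  then show "(\<integral>t. k t \<partial>lborel) = (\<integral>y. h y \<partial>lborel)"
    using h(2) k(2) by (subst (asm) ennreal_inj) (auto intro: Bochner_Integration.integral_nonneg)
qed

locale positive_density =
  fixes g :: "real \<Rightarrow> real"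
  assumes measurable_pdf[measurable]: "g \<in> borel_measurable borel"
    and pdf_nonneg: "\<And>y. 0 \<le> g y"
    and integrable_pdf: "integrable lborel g"
    and integral_pdf: "(\<integral>y. g y \<partial>lborel) = 1"
    and pdf_nonpos: "\<And>y. y \<le> 0 \<Longrightarrow> g y = 0"
    and integrable_ln_pdf: "integrable lborel (\<lambda>y. ln y * g y)"
begin

abbreviation cdf :: "real \<Rightarrow> real" where "cdf \<equiv> dens_cdf g"

lemma integrable_indicator_pdf: "A \<in> sets borel \<Longrightarrow> integrable lborel (\<lambda>y. indicator A y * g y)"
  using integrable_pdf by (rule Bochner_Integration.integrable_bound) (auto simp: indicator_def pdf_nonneg)

lemma mono_cdf: "mono cdf"
  unfolding dens_cdf_def mono_def
  by (intro allI impI integral_mono integrable_indicator_pdf) (auto simp: indicator_def pdf_nonneg)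

lemma measurable_cdf [measurable]: "cdf \<in> borel_measurable borel"
  using mono_cdf by (rule borel_measurable_mono)

lemma cdf_nonneg: "0 \<le> cdf t"
  unfolding dens_cdf_def by (auto intro!: Bochner_Integration.integral_nonneg simp: pdf_nonneg)

lemma cdf_nonpos:
  assumes "t \<le> 0"
  shows "cdf t = 0"
proof -
  have "(\<lambda>y. indicator {..t} y * g y) = (\<lambda>y. 0)"
    using assms pdf_nonpos by (auto simp: indicator_def)
  then show ?thesis unfolding dens_cdf_def by simp
qed

lemma integral_greaterThan_pdf: "(\<integral>y. indicator {t<..} y * g y \<partial>lborel) = 1 - cdf t"
proof -
  have "(\<integral>y. indicator {t<..} y * g y \<partial>lborel) + cdf t
      = (\<integral>y. indicator {t<..} y * g y + indicator {..t} y * g y \<partial>lborel)"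
    unfolding dens_cdf_def by (intro Bochner_Integration.integral_add[symmetric] integrable_indicator_pdf) auto
  also have "\<dots> = (\<integral>y. g y \<partial>lborel)"
    by (intro Bochner_Integration.integral_cong) (auto simp: indicator_def)
  finally show ?thesis using integral_pdf by simp
qed

lemma cdf_le_1: "cdf t \<le> 1"
  using integral_greaterThan_pdf[of t] Bochner_Integration.integral_nonneg[of lborel "\<lambda>y. indicator {t<..} y * g y"]
  by (simp add: pdf_nonneg)

lemma isCont_cdf: "isCont cdf t0"
  unfolding continuous_at dens_cdf_def
proof (rule tendsto_integral_dominated[where w = g])
  show "AE y in lborel. ((\<lambda>t. indicator {..t} y * g y) \<longlongrightarrow> indicator {..t0} y * g y) (at t0)"
    using AE_lborel_singleton[of t0]
  proof eventually_elim
    case (elim y)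
    consider "y < t0" | "t0 < y" using elim by linarith
    then have "\<forall>\<^sub>F t in at t0. indicator {..t} y * g y = indicator {..t0} y * g y"
    proof cases
      case 1
      show ?thesis using order_tendstoD(1)[OF tendsto_ident_at[of t0 UNIV] 1] by eventually_elim (use 1 in simp)
    next
      case 2
      show ?thesis using order_tendstoD(2)[OF tendsto_ident_at[of t0 UNIV] 2] by eventually_elim (use 2 in simp)
    qed
    then show ?case by (rule tendsto_eventually)
  qed
qed (auto simp: indicator_def pdf_nonneg integrable_pdf)

lemma max_ln_mult_pdf_eq_nn_integral:
  "ennreal (max (ln y) 0 * g y) = (\<integral>\<^sup>+t. ennreal (if 1 \<le> t \<and> t < y then g y / t else 0) \<partial>lborel)"
proof (cases "1 < y")
  case True
  have "(\<integral>\<^sup>+t. ennreal (if 1 \<le> t \<and> t < y then g y / t else 0) \<partial>lborel)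
      = (\<integral>\<^sup>+t. ennreal (g y) * ennreal (indicator {1..<y} t * (1 / t)) \<partial>lborel)"
    by (intro nn_integral_cong) (auto simp: indicator_def pdf_nonneg ennreal_mult[symmetric])
  also have "\<dots> = ennreal (g y) * ennreal (ln y)"
    using True by (subst nn_integral_cmult) (auto simp: nn_integral_inverse_Ico)
  finally show ?thesis using True pdf_nonneg[of y] by (simp add: ennreal_mult[symmetric] mult.commute)
next
  case False
  then have "(\<lambda>t. ennreal (if 1 \<le> t \<and> t < y then g y / t else 0)) = (\<lambda>t. 0)" by auto
  then show ?thesis using False pdf_nonpos[of y] by (cases "0 < y") auto
qed

lemma nn_integral_pos_ln:
  "(\<integral>\<^sup>+y. ennreal (max (ln y) 0 * g y) \<partial>lborel)
    = (\<integral>\<^sup>+t. ennreal (indicator {1..} t * (1 - cdf t) / t) \<partial>lborel)"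
proof -
  have "(\<integral>\<^sup>+y. ennreal (max (ln y) 0 * g y) \<partial>lborel)
      = (\<integral>\<^sup>+y. (\<integral>\<^sup>+t. ennreal (if 1 \<le> t \<and> t < y then g y / t else 0) \<partial>lborel) \<partial>lborel)"
    by (intro nn_integral_cong max_ln_mult_pdf_eq_nn_integral)
  also have "\<dots> = (\<integral>\<^sup>+t. (\<integral>\<^sup>+y. ennreal (if 1 \<le> t \<and> t < y then g y / t else 0) \<partial>lborel) \<partial>lborel)"
    by (rule lborel_pair.Fubini') measurable
  also have "\<dots> = (\<integral>\<^sup>+t. ennreal (indicator {1..} t * (1 - cdf t) / t) \<partial>lborel)"
  proof (intro nn_integral_cong)
    fix t :: real
    show "(\<integral>\<^sup>+y. ennreal (if 1 \<le> t \<and> t < y then g y / t else 0) \<partial>lborel)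
        = ennreal (indicator {1..} t * (1 - cdf t) / t)"
    proof (cases "1 \<le> t")
      case True
      have "(\<integral>\<^sup>+y. ennreal (if 1 \<le> t \<and> t < y then g y / t else 0) \<partial>lborel)
          = (\<integral>\<^sup>+y. ennreal (1 / t) * ennreal (indicator {t<..} y * g y) \<partial>lborel)"
        using True by (intro nn_integral_cong) (auto simp: indicator_def pdf_nonneg ennreal_mult[symmetric])
      also have "\<dots> = ennreal (1 / t) * ennreal (1 - cdf t)"
        using integral_greaterThan_pdf[of t]
        by (subst nn_integral_cmult, simp, subst nn_integral_eq_integral)
          (auto intro: integrable_indicator_pdf simp: pdf_nonneg)
      finally show ?thesis using True cdf_le_1[of t] by (simp add: ennreal_mult[symmetric])
    qed auto
  qed
  finally show ?thesis .
qed

lemma max_neg_ln_mult_pdf_eq_nn_integral: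
  "ennreal (max (- ln y) 0 * g y)
    = (\<integral>\<^sup>+t. ennreal (if 0 < t \<and> t < 1 \<and> y \<le> t then g y / t else 0) \<partial>lborel)"
proof (cases "0 < y \<and> y < 1")
  case True
  have "(\<integral>\<^sup>+t. ennreal (if 0 < t \<and> t < 1 \<and> y \<le> t then g y / t else 0) \<partial>lborel)
      = (\<integral>\<^sup>+t. ennreal (g y) * ennreal (indicator {y..<1} t * (1 / t)) \<partial>lborel)"
    using True by (intro nn_integral_cong) (auto simp: indicator_def pdf_nonneg ennreal_mult[symmetric])
  also have "\<dots> = ennreal (g y) * ennreal (- ln y)"
    using True by (subst nn_integral_cmult) (auto simp: nn_integral_inverse_Ico)
  finally show ?thesis using True pdf_nonneg[of y] by (simp add: ennreal_mult[symmetric] mult.commute)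
next
  case False
  then have "(\<lambda>t. ennreal (if 0 < t \<and> t < 1 \<and> y \<le> t then g y / t else 0)) = (\<lambda>t. 0)"
    using pdf_nonpos[of y] by (auto simp: not_less)
  then show ?thesis using False pdf_nonpos[of y] by (cases "0 < y") auto
qed

lemma nn_integral_neg_ln:
  "(\<integral>\<^sup>+y. ennreal (max (- ln y) 0 * g y) \<partial>lborel)
    = (\<integral>\<^sup>+t. ennreal (indicator {0<..<1} t * cdf t / t) \<partial>lborel)"
proof -
  have "(\<integral>\<^sup>+y. ennreal (max (- ln y) 0 * g y) \<partial>lborel)
      = (\<integral>\<^sup>+y. (\<integral>\<^sup>+t. ennreal (if 0 < t \<and> t < 1 \<and> y \<le> t then g y / t else 0) \<partial>lborel) \<partial>lborel)"
    by (intro nn_integral_cong max_neg_ln_mult_pdf_eq_nn_integral)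
  also have "\<dots> = (\<integral>\<^sup>+t. (\<integral>\<^sup>+y. ennreal (if 0 < t \<and> t < 1 \<and> y \<le> t then g y / t else 0) \<partial>lborel) \<partial>lborel)"
    by (rule lborel_pair.Fubini') measurable
  also have "\<dots> = (\<integral>\<^sup>+t. ennreal (indicator {0<..<1} t * cdf t / t) \<partial>lborel)"
  proof (intro nn_integral_cong)
    fix t :: real
    show "(\<integral>\<^sup>+y. ennreal (if 0 < t \<and> t < 1 \<and> y \<le> t then g y / t else 0) \<partial>lborel)
        = ennreal (indicator {0<..<1} t * cdf t / t)"
    proof (cases "0 < t \<and> t < 1")
      case True
      have "(\<integral>\<^sup>+y. ennreal (if 0 < t \<and> t < 1 \<and> y \<le> t then g y / t else 0) \<partial>lborel)
          = (\<integral>\<^sup>+y. ennreal (1 / t) * ennreal (indicator {..t} y * g y) \<partial>lborel)"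
        using True by (intro nn_integral_cong) (auto simp: indicator_def pdf_nonneg ennreal_mult[symmetric])
      also have "\<dots> = ennreal (1 / t) * ennreal (cdf t)"
        unfolding dens_cdf_def
        by (subst nn_integral_cmult, simp, subst nn_integral_eq_integral)
          (auto intro: integrable_indicator_pdf simp: pdf_nonneg)
      finally show ?thesis using True cdf_nonneg[of t] by (simp add: ennreal_mult[symmetric])
    qed auto
  qed
  finally show ?thesis .
qed

lemma ln_expectation_layer_cake:
  shows "integrable lborel (\<lambda>t. indicator {1..} t * (1 - cdf t) / t)"
    and "integrable lborel (\<lambda>t. indicator {0<..<1} t * cdf t / t)"
    and "(\<integral>y. ln y * g y \<partial>lborel)
      = (\<integral>t. indicator {1..} t * (1 - cdf t) / t \<partial>lborel) - (\<integral>t. indicator {0<..<1} t * cdf t / t \<partial>lborel)"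
proof -
  have ln_parts: "integrable lborel (\<lambda>y. max (ln y) 0 * g y)" "integrable lborel (\<lambda>y. max (- ln y) 0 * g y)"
    using integrable_ln_pdf
    by (auto intro!: Bochner_Integration.integrable_bound[OF integrable_ln_pdf] AE_I2
        simp: abs_mult pdf_nonneg mult_right_mono)
  note pos = integrable_integral_eq_if_nn_integral_eq[OF ln_parts(1) _ _ _ nn_integral_pos_ln]
  note neg = integrable_integral_eq_if_nn_integral_eq[OF ln_parts(2) _ _ _ nn_integral_neg_ln]
  show "integrable lborel (\<lambda>t. indicator {1..} t * (1 - cdf t) / t)"
    "integrable lborel (\<lambda>t. indicator {0<..<1} t * cdf t / t)"
    using pos neg cdf_nonneg cdf_le_1 by (auto simp: pdf_nonneg indicator_def)
  have "(\<integral>y. ln y * g y \<partial>lborel) = (\<integral>y. max (ln y) 0 * g y - max (- ln y) 0 * g y \<partial>lborel)"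
    by (intro Bochner_Integration.integral_cong) (auto simp: max_def algebra_simps)
  also have "\<dots> = (\<integral>y. max (ln y) 0 * g y \<partial>lborel) - (\<integral>y. max (- ln y) 0 * g y \<partial>lborel)"
    using ln_parts by (rule Bochner_Integration.integral_diff)
  finally show "(\<integral>y. ln y * g y \<partial>lborel)
      = (\<integral>t. indicator {1..} t * (1 - cdf t) / t \<partial>lborel) - (\<integral>t. indicator {0<..<1} t * cdf t / t \<partial>lborel)"
    using pos neg cdf_nonneg cdf_le_1 by (simp add: pdf_nonneg indicator_def)
qed

end

lemma integral_divide_pos_if_isCont_pos:
  fixes h :: "real \<Rightarrow> real"
  assumes "integrable lborel (\<lambda>t. indicator {0<..} t * h t / t)"
    and "\<And>t. 0 \<le> h t" "isCont h t0" "0 < t0" "0 < h t0"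
  shows "0 < (\<integral>t. indicator {0<..} t * h t / t \<partial>lborel)"
proof -
  have "\<forall>\<^sub>F t in at t0. h t0 / 2 < h t"
    using order_tendstoD(1)[OF assms(3)[unfolded continuous_at], of "h t0 / 2"] assms(5) by simp
  then obtain d where d: "0 < d" "\<And>t. t \<noteq> t0 \<Longrightarrow> \<bar>t - t0\<bar> < d \<Longrightarrow> h t0 / 2 < h t"
    unfolding eventually_at dist_real_def by auto
  define r where "r = min (d / 2) (t0 / 2)"
  have r: "0 < r" "r < d" "r \<le> t0 / 2" using d assms(4) unfolding r_def by auto
  show ?thesis
  proof (rule integral_pos_if_bounded_below_on_interval)
    show "0 \<le> indicator {0<..} t * h t / t" for t
      using assms(2)[of t] by (auto simp: indicator_def)
    show "h t0 / 2 / (2 * t0) \<le> indicator {0<..} t * h t / t" if "t \<in> {t0 - r..t0 + r}" for t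
    proof -
      have t: "0 < t" "t \<le> 2 * t0" "\<bar>t - t0\<bar> < d" using that r by auto
      have "h t0 / 2 \<le> h t" using d(2)[OF _ t(3)] assms(5) by (cases "t = t0") auto
      then have "h t0 / 2 / (2 * t0) \<le> h t / t" using t assms(5) by (intro frac_le) auto
      then show ?thesis using t by simp
    qed
  qed (use assms r in auto)
qed

lemma ln_expectation_less_if_strict_stoch_dom:
  assumes Y: "positive_density gY" and Z: "positive_density gZ" and dom: "strict_stoch_dom gY gZ"
  shows "(\<integral>y. ln y * gZ y \<partial>lborel) < (\<integral>y. ln y * gY y \<partial>lborel)"
proof -
  interpret Y: positive_density gY by (rule Y)
  interpret Z: positive_density gZ by (rule Z)
  have le: "\<And>t. Y.cdf t \<le> Z.cdf t" and ne: "Z.cdf \<noteq> Y.cdf"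
    using dom unfolding strict_stoch_dom_def by auto
  define \<psi> where "\<psi> t = indicator {0<..} t * (Z.cdf t - Y.cdf t) / t" for t
  have \<psi>: "\<psi> t = (indicator {1..} t * (1 - Y.cdf t) / t - indicator {1..} t * (1 - Z.cdf t) / t)
      + (indicator {0<..<1} t * Z.cdf t / t - indicator {0<..<1} t * Y.cdf t / t)" for t
    unfolding \<psi>_def by (auto simp: indicator_def field_simps)
  have "(\<integral>y. ln y * gY y \<partial>lborel) - (\<integral>y. ln y * gZ y \<partial>lborel) = (\<integral>t. \<psi> t \<partial>lborel)"
    unfolding \<psi> using Y.ln_expectation_layer_cake Z.ln_expectation_layer_cake by simp
  moreover have "0 < (\<integral>t. \<psi> t \<partial>lborel)"
  proof -
    obtain t0 where "Z.cdf t0 \<noteq> Y.cdf t0" using ne by (auto simp: fun_eq_iff)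
    then have t0: "0 < Z.cdf t0 - Y.cdf t0" using le[of t0] by simp
    have "0 < t0"
    proof (rule ccontr)
      assume "\<not> 0 < t0"
      then show False using t0 Y.cdf_nonpos[of t0] Z.cdf_nonpos[of t0] by simp
    qed
    have "integrable lborel \<psi>"
      unfolding \<psi> using Y.ln_expectation_layer_cake Z.ln_expectation_layer_cake by simp
    then show ?thesis
      unfolding \<psi>_def using le t0 \<open>0 < t0\<close>
      by (intro integral_divide_pos_if_isCont_pos continuous_intros Y.isCont_cdf Z.isCont_cdf) auto
  qed
  ultimately show ?thesis by linarith
qed

section \<open>Partial moments of a density\<close>

definition upper_partial_moment :: "(real \<Rightarrow> real) \<Rightarrow> real \<Rightarrow> real \<Rightarrow> real" where
  "upper_partial_moment f \<nu> q = (\<integral>x. max (x - \<nu>) 0 powr (q - 1) * f x \<partial>lborel)"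

definition lower_partial_moment :: "(real \<Rightarrow> real) \<Rightarrow> real \<Rightarrow> real \<Rightarrow> real" where
  "lower_partial_moment f \<nu> q = (\<integral>x. max (\<nu> - x) 0 powr (q - 1) * f x \<partial>lborel)"

definition moment_balance :: "(real \<Rightarrow> real) \<Rightarrow> real \<Rightarrow> real \<Rightarrow> real" where
  "moment_balance f \<nu> q = upper_partial_moment f \<nu> q - lower_partial_moment f \<nu> q"

definition upper_shift_quotient :: "(real \<Rightarrow> real) \<Rightarrow> real \<Rightarrow> real \<Rightarrow> real \<Rightarrow> real" where
  "upper_shift_quotient f c \<Delta> q = (\<integral>x. shift_quotient q \<Delta> (x - c) * f x \<partial>lborel)"

definition balance_shift_quotient :: "(real \<Rightarrow> real) \<Rightarrow> real \<Rightarrow> real \<Rightarrow> real \<Rightarrow> real" where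
  "balance_shift_quotient f c \<Delta> q =
    upper_shift_quotient f c \<Delta> q + upper_shift_quotient (\<lambda>x. f (- x)) (- c) (- \<Delta>) q"

definition balance_order_derivative :: "(real \<Rightarrow> real) \<Rightarrow> real \<Rightarrow> real \<Rightarrow> real" where
  "balance_order_derivative f c p =
    (\<integral>x. pos_powr_ln p (x - c) * f x \<partial>lborel) - (\<integral>x. pos_powr_ln p (x + c) * f (- x) \<partial>lborel)"

definition half_density :: "(real \<Rightarrow> real) \<Rightarrow> real \<Rightarrow> real \<Rightarrow> real \<Rightarrow> real" where
  "half_density f c p y = max y 0 powr (p - 1) * f (c + y) / upper_partial_moment f c p"

lemma pmean_eq_The_moment_balance: "pmean f q = (THE \<nu>. moment_balance f \<nu> q = 0)"
  unfolding pmean_def moment_balance_def upper_partial_moment_def lower_partial_moment_def by simp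

lemma pdomain_reflect: "pdomain (\<lambda>x. f (- x)) = pdomain f"
  using lborel_integrable_real_affine_iff[of "-1" "\<lambda>x. \<bar>x\<bar> powr (_ - 1) * f x" 0]
  unfolding pdomain_def by auto

lemma lower_partial_moment_reflect:
  "lower_partial_moment f \<nu> q = upper_partial_moment (\<lambda>x. f (- x)) (- \<nu>) q"
  using lborel_integral_real_affine[of "-1" "\<lambda>x. max (\<nu> - x) 0 powr (q - 1) * f x" 0]
  unfolding lower_partial_moment_def upper_partial_moment_def by (simp add: add.commute)

lemma upper_partial_moment_eq_0:
  assumes "\<And>x. \<nu> < x \<Longrightarrow> f x = 0"
  shows "upper_partial_moment f \<nu> q = 0"
proof -
  have "(\<lambda>x. max (x - \<nu>) 0 powr (q - 1) * f x) = (\<lambda>x. 0)"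
    using assms by (force simp: max_def)
  then show ?thesis unfolding upper_partial_moment_def by simp
qed

lemma lower_partial_moment_eq_0:
  assumes "\<And>x. x < \<nu> \<Longrightarrow> f x = 0"
  shows "lower_partial_moment f \<nu> q = 0"
  unfolding lower_partial_moment_reflect using assms by (intro upper_partial_moment_eq_0) auto

lemma upper_shift_quotient_0:
  "upper_shift_quotient f c 0 p = - (p - 1) * upper_partial_moment f c (p - 1)"
proof -
  have "(\<lambda>x. shift_quotient p 0 (x - c) * f x) = (\<lambda>x. - (p - 1) * (max (x - c) 0 powr (p - 1 - 1) * f x))"
    unfolding shift_quotient_def by (auto simp: max_def)
  then show ?thesis
    unfolding upper_shift_quotient_def upper_partial_moment_def by simp
qed

lemma ln_expectation_half_density:
  "(\<integral>y. ln y * half_density f c p y \<partial>lborel)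
    = (\<integral>x. pos_powr_ln p (x - c) * f x \<partial>lborel) / upper_partial_moment f c p"
proof -
  have "ln y * half_density f c p y = pos_powr_ln p ((c + y) - c) * f (c + y) / upper_partial_moment f c p" for y
    unfolding half_density_def pos_powr_ln_def by (auto simp: max_def)
  then show ?thesis
    using lborel_integral_real_affine[of 1 "\<lambda>x. pos_powr_ln p (x - c) * f x" c] by simp
qed

locale nonneg_density =
  fixes f :: "real \<Rightarrow> real"
  assumes measurable_density[measurable]: "f \<in> borel_measurable borel"
    and density_nonneg: "\<And>x. 0 \<le> f x"
    and integrable_density: "integrable lborel f"
begin

lemma nonneg_density_reflect: "nonneg_density (\<lambda>x. f (- x))"
  using density_nonneg lborel_integrable_real_affine[OF integrable_density, of "-1" 0]
  by unfold_locales auto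

lemma pdomain_ge_1: "q \<in> pdomain f \<Longrightarrow> 1 \<le> q"
  unfolding pdomain_def by auto

lemma integrable_abs_powr_density:
  assumes "q \<in> pdomain f" "1 \<le> q'" "q' \<le> q"
  shows "integrable lborel (\<lambda>x. \<bar>x\<bar> powr (q' - 1) * f x)"
proof (rule Bochner_Integration.integrable_bound)
  show "integrable lborel (\<lambda>x. f x + \<bar>x\<bar> powr (q - 1) * f x)"
    using assms(1) integrable_density unfolding pdomain_def by auto
  show "AE x in lborel. norm (\<bar>x\<bar> powr (q' - 1) * f x) \<le> norm (f x + \<bar>x\<bar> powr (q - 1) * f x)"
  proof (intro AE_I2)
    fix x
    have "\<bar>x\<bar> powr (q' - 1) * f x \<le> (1 + \<bar>x\<bar> powr (q - 1)) * f x"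
      using powr_le_1_add_powr[of "\<bar>x\<bar>" "q' - 1" "q - 1"] assms density_nonneg[of x]
      by (intro mult_right_mono) auto
    then show "norm (\<bar>x\<bar> powr (q' - 1) * f x) \<le> norm (f x + \<bar>x\<bar> powr (q - 1) * f x)"
      using density_nonneg[of x] by (simp add: abs_mult distrib_right)
  qed
qed measurable

lemma pdomain_downward_closed: "q \<in> pdomain f \<Longrightarrow> 1 \<le> q' \<Longrightarrow> q' \<le> q \<Longrightarrow> q' \<in> pdomain f"
  using integrable_abs_powr_density unfolding pdomain_def by blast

lemma is_interval_pdomain: "is_interval (pdomain f)"
  unfolding is_interval_1 using pdomain_downward_closed pdomain_ge_1 by (meson order_trans)

lemma interior_pdomain_neighbourhood:
  assumes "p \<in> interior (pdomain f)"
  obtains e where "0 < e" "1 < p - e" "{p - e..p + e} \<subseteq> pdomain f"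
proof -
  obtain \<delta> where \<delta>: "0 < \<delta>" "ball p \<delta> \<subseteq> pdomain f"
    using assms mem_interior by blast
  then have "p - \<delta> / 2 \<in> pdomain f" by (auto simp: dist_real_def)
  then have "1 < p - \<delta> / 4" using pdomain_ge_1 \<delta>(1) by fastforce
  moreover have "{p - \<delta> / 4..p + \<delta> / 4} \<subseteq> pdomain f"
    using \<delta> by (force simp: dist_real_def)
  ultimately show ?thesis using \<delta>(1) that[of "\<delta> / 4"] by auto
qed

lemma interior_pdomainD:
  assumes "p \<in> interior (pdomain f)"
  shows "p \<in> pdomain f" "1 < p"
proof -
  obtain e where "0 < e" "1 < p - e" "{p - e..p + e} \<subseteq> pdomain f"
    using interior_pdomain_neighbourhood[OF assms] .
  then show "p \<in> pdomain f" "1 < p" by auto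
qed

lemma integrable_abs_diff_powr_density:
  assumes "q \<in> pdomain f"
  shows "integrable lborel (\<lambda>x. \<bar>x - c\<bar> powr (q - 1) * f x)"
proof (rule Bochner_Integration.integrable_bound)
  let ?r = "q - 1"
  show "integrable lborel (\<lambda>x. 2 powr ?r * (\<bar>x\<bar> powr ?r * f x + \<bar>c\<bar> powr ?r * f x))"
    using assms integrable_density unfolding pdomain_def by auto
  show "AE x in lborel. norm (\<bar>x - c\<bar> powr ?r * f x)
      \<le> norm (2 powr ?r * (\<bar>x\<bar> powr ?r * f x + \<bar>c\<bar> powr ?r * f x))"
  proof (intro AE_I2)
    fix x
    have "\<bar>x - c\<bar> powr ?r * f x \<le> 2 powr ?r * (\<bar>x\<bar> powr ?r + \<bar>c\<bar> powr ?r) * f x"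
      using abs_diff_powr_le[of ?r x c] pdomain_ge_1[OF assms] density_nonneg[of x]
      by (intro mult_right_mono) auto
    then show "norm (\<bar>x - c\<bar> powr ?r * f x)
        \<le> norm (2 powr ?r * (\<bar>x\<bar> powr ?r * f x + \<bar>c\<bar> powr ?r * f x))"
      using density_nonneg[of x] by (simp add: abs_mult algebra_simps)
  qed
qed measurable

lemma integrable_abs_diff_powr_density_singular:
  assumes c: "isCont f c" and s: "-1 < s" "s \<le> 0"
  shows "integrable lborel (\<lambda>x. \<bar>x - c\<bar> powr s * f x)"
proof -
  obtain r where r: "0 < r" "\<And>x. \<bar>x - c\<bar> < r \<Longrightarrow> f x \<le> f c + 1"
    using isCont_bounded_above_near[OF c] by blast
  define H where "H y = indicator {0..r} y * y powr s" for y
  have H: "integrable lborel H" "\<And>y. 0 \<le> H y"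
    unfolding H_def using integrable_indicator_powr_from_0[OF s(1)] r(1) by auto
  have "integrable lborel (\<lambda>x. H (x - c))" "integrable lborel (\<lambda>x. H (c - x))"
    using lborel_integrable_real_affine[OF H(1), of 1 "- c"] lborel_integrable_real_affine[OF H(1), of "- 1" c]
    by simp_all
  then have "integrable lborel (\<lambda>x. (f c + 1) * (H (x - c) + H (c - x)) + r powr s * f x)"
    using integrable_density by auto
  then show ?thesis
  proof (rule Bochner_Integration.integrable_bound)
    show "AE x in lborel. norm (\<bar>x - c\<bar> powr s * f x)
        \<le> norm ((f c + 1) * (H (x - c) + H (c - x)) + r powr s * f x)"
    proof (intro AE_I2)
      fix x
      have far: "\<bar>x - c\<bar> powr s * f x \<le> r powr s * f x" if "r \<le> \<bar>x - c\<bar>"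
        using that r(1) s density_nonneg[of x] by (intro mult_right_mono powr_mono2') auto
      have "\<bar>x - c\<bar> powr s \<le> H (x - c) + H (c - x)" if "\<bar>x - c\<bar> < r"
        using that H(2) unfolding H_def by (cases "c \<le> x") (auto simp: abs_if add_increasing add_increasing2)
      then have near: "\<bar>x - c\<bar> powr s * f x \<le> (f c + 1) * (H (x - c) + H (c - x))" if "\<bar>x - c\<bar> < r"
        using that r(2) density_nonneg[of x] H(2) by (subst mult.commute) (intro mult_mono, auto)
      have nn: "0 \<le> (f c + 1) * (H (x - c) + H (c - x))" "0 \<le> r powr s * f x"
        using density_nonneg[of c] density_nonneg[of x] H(2) by auto
      have "\<bar>x - c\<bar> powr s * f x \<le> (f c + 1) * (H (x - c) + H (c - x)) + r powr s * f x"
      proof (cases "\<bar>x - c\<bar> < r")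
        case True
        then show ?thesis using near[OF True] nn(2) by linarith
      next
        case False
        then show ?thesis using far nn(1) by linarith
      qed
      then show "norm (\<bar>x - c\<bar> powr s * f x)
          \<le> norm ((f c + 1) * (H (x - c) + H (c - x)) + r powr s * f x)"
        using nn density_nonneg[of x] by (simp add: abs_mult)
    qed
  qed measurable
qed

lemma integrable_upper_kernel:
  assumes "q \<in> pdomain f"
  shows "integrable lborel (\<lambda>x. max (x - c) 0 powr (q - 1) * f x)"
proof (rule Bochner_Integration.integrable_bound)
  show "integrable lborel (\<lambda>x. \<bar>x - c\<bar> powr (q - 1) * f x)"
    using integrable_abs_diff_powr_density[OF assms] .
  show "AE x in lborel. norm (max (x - c) 0 powr (q - 1) * f x) \<le> norm (\<bar>x - c\<bar> powr (q - 1) * f x)"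
    using pdomain_ge_1[OF assms] density_nonneg
    by (intro AE_I2) (auto simp: abs_mult intro!: mult_right_mono powr_mono2)
qed measurable

lemma integrable_upper_kernel_singular:
  assumes c: "isCont f c" and p: "p \<in> pdomain f" "1 < p"
  shows "integrable lborel (\<lambda>x. max (x - c) 0 powr (p - 2) * f x)"
proof (rule Bochner_Integration.integrable_bound)
  show "integrable lborel (\<lambda>x. \<bar>x - c\<bar> powr min (p - 2) 0 * f x + \<bar>x - c\<bar> powr (p - 1) * f x)"
    using p by (intro Bochner_Integration.integrable_add integrable_abs_diff_powr_density_singular[OF c]
        integrable_abs_diff_powr_density) auto
  show "AE x in lborel. norm (max (x - c) 0 powr (p - 2) * f x)
      \<le> norm (\<bar>x - c\<bar> powr min (p - 2) 0 * f x + \<bar>x - c\<bar> powr (p - 1) * f x)"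
  proof (intro AE_I2)
    fix x
    have "max (x - c) 0 powr (p - 2) \<le> \<bar>x - c\<bar> powr min (p - 2) 0 + \<bar>x - c\<bar> powr (p - 1)"
      by (cases "c < x") (auto intro: powr_le_powr_add_powr)
    then show "norm (max (x - c) 0 powr (p - 2) * f x)
        \<le> norm (\<bar>x - c\<bar> powr min (p - 2) 0 * f x + \<bar>x - c\<bar> powr (p - 1) * f x)"
      using density_nonneg[of x] by (simp add: abs_mult distrib_right[symmetric] mult_right_mono)
  qed
qed measurable

lemma integrable_pos_powr_ln_kernel:
  assumes p: "p \<in> interior (pdomain f)"
  shows "integrable lborel (\<lambda>x. pos_powr_ln p (x - c) * f x)"
proof -
  obtain e where e: "0 < e" "1 < p - e" "{p - e..p + e} \<subseteq> pdomain f"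
    using interior_pdomain_neighbourhood[OF p] .
  let ?w = "\<lambda>x. (\<bar>x - c\<bar> powr (p - e - 1) * f x + \<bar>x - c\<bar> powr (p + e - 1) * f x) / (e / 2)"
  show ?thesis
  proof (rule Bochner_Integration.integrable_bound)
    show "integrable lborel ?w"
      using e(1,3) by (intro integrable_divide Bochner_Integration.integrable_add integrable_abs_diff_powr_density) auto
    show "AE x in lborel. norm (pos_powr_ln p (x - c) * f x) \<le> norm (?w x)"
    proof (intro AE_I2)
      fix x
      have "\<bar>pos_powr_ln p (x - c)\<bar> \<le> (\<bar>x - c\<bar> powr (p - e - 1) + \<bar>x - c\<bar> powr (p + e - 1)) / (e / 2)"
        using abs_powr_mult_ln_le[of "x - c" "e / 2" "p - e" p "p + e"] e
        unfolding pos_powr_ln_def by auto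
      then have "\<bar>pos_powr_ln p (x - c)\<bar> * f x
          \<le> (\<bar>x - c\<bar> powr (p - e - 1) + \<bar>x - c\<bar> powr (p + e - 1)) / (e / 2) * f x"
        using density_nonneg[of x] by (rule mult_right_mono)
      then show "norm (pos_powr_ln p (x - c) * f x) \<le> norm (?w x)"
        using density_nonneg[of x] e(1) by (simp add: abs_mult field_simps)
    qed
  qed measurable
qed

lemma upper_partial_moment_nonneg: "0 \<le> upper_partial_moment f \<nu> q"
  unfolding upper_partial_moment_def using density_nonneg by simp

lemma upper_partial_moment_antimono:
  assumes "q \<in> pdomain f" "\<nu> \<le> \<nu>'"
  shows "upper_partial_moment f \<nu>' q \<le> upper_partial_moment f \<nu> q"
  unfolding upper_partial_moment_def
  using assms pdomain_ge_1[OF assms(1)] density_nonneg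
  by (intro integral_mono integrable_upper_kernel) (auto intro!: mult_right_mono powr_mono2)

lemma upper_partial_moment_strict_antimono:
  assumes q: "q \<in> pdomain f" and "\<nu> < \<alpha>" "\<alpha> < \<beta>" "\<beta> \<le> \<nu>'"
    and c: "0 < c" "\<And>x. x \<in> {\<alpha>..\<beta>} \<Longrightarrow> c \<le> f x"
  shows "upper_partial_moment f \<nu>' q < upper_partial_moment f \<nu> q"
proof -
  let ?h = "\<lambda>x. max (x - \<nu>) 0 powr (q - 1) * f x - max (x - \<nu>') 0 powr (q - 1) * f x"
  have "0 < (\<integral>x. ?h x \<partial>lborel)"
  proof (rule integral_pos_if_bounded_below_on_interval)
    show "integrable lborel ?h" using integrable_upper_kernel[OF q] by auto
    show "0 \<le> ?h x" for x
      using assms pdomain_ge_1[OF q] density_nonneg[of x] by (auto intro!: mult_right_mono powr_mono2)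
    show "(\<alpha> - \<nu>) powr (q - 1) * c \<le> ?h x" if "x \<in> {\<alpha>..\<beta>}" for x
      using that assms pdomain_ge_1[OF q] by (auto intro!: mult_mono powr_mono2)
  qed (use assms in auto)
  then show ?thesis unfolding upper_partial_moment_def using integrable_upper_kernel[OF q] by simp
qed

lemma upper_partial_moment_pos:
  assumes "integrable lborel (\<lambda>x. max (x - \<nu>) 0 powr (q - 1) * f x)"
    and "\<nu> < \<alpha>" "\<alpha> < \<beta>" "0 < c" "\<And>x. x \<in> {\<alpha>..\<beta>} \<Longrightarrow> c \<le> f x"
  shows "0 < upper_partial_moment f \<nu> q"
  unfolding upper_partial_moment_def
proof (rule integral_pos_if_bounded_below_on_interval)
  let ?m = "min ((\<alpha> - \<nu>) powr (q - 1)) ((\<beta> - \<nu>) powr (q - 1))"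
  show "c * ?m \<le> max (x - \<nu>) 0 powr (q - 1) * f x" if "x \<in> {\<alpha>..\<beta>}" for x
  proof -
    have "?m \<le> (x - \<nu>) powr (q - 1)"
    proof (cases "1 \<le> q")
      case True
      then have "(\<alpha> - \<nu>) powr (q - 1) \<le> (x - \<nu>) powr (q - 1)" using that assms(2) by (intro powr_mono2) auto
      then show ?thesis by linarith
    next
      case False
      then have "(\<beta> - \<nu>) powr (q - 1) \<le> (x - \<nu>) powr (q - 1)" using that assms(2,3) by (intro powr_mono2') auto
      then show ?thesis by linarith
    qed
    then have "?m * c \<le> (x - \<nu>) powr (q - 1) * f x"
      using that assms by (intro mult_mono) auto
    then show ?thesis using that assms(2) by (simp add: mult.commute)
  qed
qed (use assms density_nonneg in auto)

lemma isCont_upper_partial_moment: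
  assumes q: "q \<in> pdomain f"
  shows "isCont (\<lambda>\<nu>. upper_partial_moment f \<nu> q) \<nu>0"
  unfolding continuous_at upper_partial_moment_def
proof (rule tendsto_integral_dominated)
  define K where "K = \<bar>\<nu>0\<bar> + 1"
  let ?r = "q - 1"
  show "integrable lborel (\<lambda>x. 2 powr ?r * (\<bar>x\<bar> powr ?r * f x + K powr ?r * f x))"
    using q integrable_density unfolding pdomain_def by auto
  show "AE x in lborel. ((\<lambda>\<nu>. max (x - \<nu>) 0 powr ?r * f x) \<longlongrightarrow> max (x - \<nu>0) 0 powr ?r * f x) (at \<nu>0)"
    \<comment> \<open>only AE: for \<open>q = 1\<close> the kernel jumps at \<open>x = \<nu>0\<close>, since \<open>0 powr 0 = 0\<close>\<close>
    using AE_lborel_singleton[of \<nu>0]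
    by eventually_elim (auto intro!: tendsto_intros tendsto_pos_part_powr)
  have "\<forall>\<^sub>F \<nu> in at \<nu>0. \<bar>\<nu>\<bar> \<le> K"
    unfolding K_def using eventually_at_ball[of 1 \<nu>0 UNIV] by (auto elim!: eventually_mono simp: dist_real_def)
  then show "\<forall>\<^sub>F \<nu> in at \<nu>0. AE x in lborel.
      norm (max (x - \<nu>) 0 powr ?r * f x) \<le> 2 powr ?r * (\<bar>x\<bar> powr ?r * f x + K powr ?r * f x)"
  proof eventually_elim
    case (elim \<nu>)
    have bound: "max (x - \<nu>) 0 powr ?r \<le> 2 powr ?r * (\<bar>x\<bar> powr ?r + K powr ?r)" for x
    proof -
      have "max (x - \<nu>) 0 powr ?r \<le> \<bar>x - \<nu>\<bar> powr ?r"
        using pdomain_ge_1[OF q] by (intro powr_mono2) auto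
      also have "\<dots> \<le> 2 powr ?r * (\<bar>x\<bar> powr ?r + \<bar>\<nu>\<bar> powr ?r)"
        using abs_diff_powr_le pdomain_ge_1[OF q] by simp
      also have "\<dots> \<le> 2 powr ?r * (\<bar>x\<bar> powr ?r + K powr ?r)"
        using elim pdomain_ge_1[OF q] by (intro mult_left_mono add_left_mono powr_mono2) auto
      finally show ?thesis .
    qed
    show ?case
    proof (intro AE_I2)
      fix x
      have "max (x - \<nu>) 0 powr ?r * f x \<le> 2 powr ?r * (\<bar>x\<bar> powr ?r + K powr ?r) * f x"
        using bound[of x] density_nonneg[of x] by (rule mult_right_mono)
      then show "norm (max (x - \<nu>) 0 powr ?r * f x) \<le> 2 powr ?r * (\<bar>x\<bar> powr ?r * f x + K powr ?r * f x)"
        using density_nonneg[of x] by (simp add: abs_mult algebra_simps)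
    qed
  qed
qed measurable

lemma upper_partial_moment_at_top:
  assumes q: "q \<in> pdomain f"
  shows "((\<lambda>\<nu>. upper_partial_moment f \<nu> q) \<longlongrightarrow> 0) at_top"
proof -
  have "((\<lambda>\<nu>. \<integral>x. max (x - \<nu>) 0 powr (q - 1) * f x \<partial>lborel) \<longlongrightarrow> (\<integral>x. 0 \<partial>(lborel :: real measure))) at_top"
  proof (rule integral_dominated_convergence_at_top)
    show "integrable lborel (\<lambda>x. \<bar>x\<bar> powr (q - 1) * f x)"
      using q unfolding pdomain_def by simp
    show "AE x in lborel. ((\<lambda>\<nu>. max (x - \<nu>) 0 powr (q - 1) * f x) \<longlongrightarrow> 0) at_top"
    proof (intro AE_I2 tendsto_eventually)
      fix x show "\<forall>\<^sub>F \<nu> in at_top. max (x - \<nu>) 0 powr (q - 1) * f x = 0"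
        using eventually_gt_at_top[of x] by eventually_elim auto
    qed
    show "\<forall>\<^sub>F \<nu> in at_top. AE x in lborel. norm (max (x - \<nu>) 0 powr (q - 1) * f x) \<le> \<bar>x\<bar> powr (q - 1) * f x"
      using eventually_ge_at_top[of 0]
    proof eventually_elim
      case (elim \<nu>)
      then show ?case
        using pdomain_ge_1[OF q] density_nonneg
        by (intro AE_I2) (auto simp: abs_mult intro!: mult_right_mono powr_mono2)
    qed
  qed measurable
  then show ?thesis unfolding upper_partial_moment_def by simp
qed

lemma upper_partial_moment_continuous_order:
  assumes e: "e \<in> pdomain f"
  shows "((\<lambda>q. upper_partial_moment f \<nu> q) \<longlongrightarrow> upper_partial_moment f \<nu> e) (at e within pdomain f)"
proof -
  obtain M where M: "M \<in> pdomain f" "\<forall>\<^sub>F q in at e within pdomain f. q \<le> M"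
    using eventually_at_within_bounded_above[OF e] .
  show ?thesis
    unfolding upper_partial_moment_def
  proof (rule tendsto_integral_dominated)
    show "integrable lborel (\<lambda>x. (1 + \<bar>x - \<nu>\<bar> powr (M - 1)) * f x)"
      using integrable_density integrable_abs_diff_powr_density[OF M(1)] by (simp add: distrib_right)
    show "AE x in lborel. ((\<lambda>q. max (x - \<nu>) 0 powr (q - 1) * f x) \<longlongrightarrow> max (x - \<nu>) 0 powr (e - 1) * f x)
        (at e within pdomain f)"
      using AE_lborel_singleton[of \<nu>]
      by eventually_elim (auto intro!: tendsto_intros tendsto_pos_part_powr)
    show "\<forall>\<^sub>F q in at e within pdomain f. AE x in lborel.
        norm (max (x - \<nu>) 0 powr (q - 1) * f x) \<le> (1 + \<bar>x - \<nu>\<bar> powr (M - 1)) * f x"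
      using M(2) eventually_at_within_self[of "pdomain f" e]
    proof eventually_elim
      case (elim q)
      show ?case
      proof (intro AE_I2)
        fix x
        have "max (x - \<nu>) 0 powr (q - 1) \<le> 1 + max (x - \<nu>) 0 powr (M - 1)"
          using elim pdomain_ge_1 by (intro powr_le_1_add_powr) auto
        also have "\<dots> \<le> 1 + \<bar>x - \<nu>\<bar> powr (M - 1)"
          using pdomain_ge_1[OF M(1)] by (intro add_left_mono powr_mono2) auto
        finally show "norm (max (x - \<nu>) 0 powr (q - 1) * f x) \<le> (1 + \<bar>x - \<nu>\<bar> powr (M - 1)) * f x"
          using density_nonneg[of x] by (simp add: mult_right_mono)
      qed
    qed
  qed measurable
qed

lemma upper_partial_moment_difference_quotient:
  assumes q: "q \<in> pdomain f" and p: "p \<in> pdomain f"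
  shows "(upper_partial_moment f c q - upper_partial_moment f c p) / (q - p)
    = (\<integral>x. (max (x - c) 0 powr (q - 1) - max (x - c) 0 powr (p - 1)) / (q - p) * f x \<partial>lborel)"
proof -
  have "(upper_partial_moment f c q - upper_partial_moment f c p) / (q - p)
      = (\<integral>x. max (x - c) 0 powr (q - 1) * f x - max (x - c) 0 powr (p - 1) * f x \<partial>lborel) / (q - p)"
    unfolding upper_partial_moment_def
    using integrable_upper_kernel[OF q] integrable_upper_kernel[OF p] by (subst Bochner_Integration.integral_diff) auto
  also have "\<dots> = (\<integral>x. (max (x - c) 0 powr (q - 1) - max (x - c) 0 powr (p - 1)) / (q - p) * f x \<partial>lborel)"
    by (simp add: left_diff_distrib)
  finally show ?thesis .
qed

lemma upper_partial_moment_has_derivative_order: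
  assumes p: "p \<in> interior (pdomain f)"
  shows "((\<lambda>q. upper_partial_moment f c q) has_real_derivative (\<integral>x. pos_powr_ln p (x - c) * f x \<partial>lborel)) (at p)"
proof -
  obtain e where e: "0 < e" "1 < p - e" "{p - e..p + e} \<subseteq> pdomain f"
    using interior_pdomain_neighbourhood[OF p] .
  have pd: "p \<in> pdomain f" using e by auto
  let ?d = "\<lambda>q x. (max (x - c) 0 powr (q - 1) - max (x - c) 0 powr (p - 1)) / (q - p) * f x"
  have near: "\<forall>\<^sub>F q in at p. q \<noteq> p \<and> \<bar>q - p\<bar> < e / 2"
    using e(1) by (auto simp: eventually_at dist_real_def intro!: exI[of _ "e / 2"])
  have "\<forall>\<^sub>F q in at p. (upper_partial_moment f c q - upper_partial_moment f c p) / (q - p) = (\<integral>x. ?d q x \<partial>lborel)"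
    using near
  proof eventually_elim
    case (elim q)
    then have "q \<in> {p - e..p + e}" by (auto simp: abs_if split: if_splits)
    then show ?case using e(3) pd by (intro upper_partial_moment_difference_quotient) auto
  qed
  moreover have "((\<lambda>q. \<integral>x. ?d q x \<partial>lborel) \<longlongrightarrow> (\<integral>x. pos_powr_ln p (x - c) * f x \<partial>lborel)) (at p)"
  proof (rule tendsto_integral_dominated)
    let ?w = "\<lambda>x. (\<bar>x - c\<bar> powr (p - e - 1) * f x + \<bar>x - c\<bar> powr (p + e - 1) * f x) / (e / 2)"
    show "integrable lborel ?w"
      using e(1,3) by (intro integrable_divide Bochner_Integration.integrable_add integrable_abs_diff_powr_density) auto
    show "AE x in lborel. ((\<lambda>q. ?d q x) \<longlongrightarrow> pos_powr_ln p (x - c) * f x) (at p)"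
      using pos_part_powr_has_derivative_exponent
      by (intro AE_I2 tendsto_mult_right) (simp add: has_field_derivative_iff)
    show "\<forall>\<^sub>F q in at p. AE x in lborel. norm (?d q x) \<le> ?w x"
      using near
    proof eventually_elim
      case (elim q)
      show ?case
      proof (intro AE_I2)
        fix x
        have "\<bar>(max (x - c) 0 powr (q - 1) - max (x - c) 0 powr (p - 1)) / (q - p)\<bar>
            \<le> (\<bar>x - c\<bar> powr (p - e - 1) + \<bar>x - c\<bar> powr (p + e - 1)) / (e / 2)"
          using abs_pos_part_powr_exponent_quotient_le[of q p "e / 2" "x - c"] elim by simp
        then have "norm (?d q x)
            \<le> (\<bar>x - c\<bar> powr (p - e - 1) + \<bar>x - c\<bar> powr (p + e - 1)) / (e / 2) * f x"
          unfolding real_norm_def abs_mult abs_of_nonneg[OF density_nonneg]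
          using density_nonneg[of x] by (rule mult_right_mono)
        also have "\<dots> = ?w x" by (simp add: field_simps)
        finally show "norm (?d q x) \<le> ?w x" .
      qed
    qed
  qed measurable
  ultimately show ?thesis
    unfolding has_field_derivative_iff by (rule tendsto_cong[THEN iffD2])
qed

lemma upper_partial_moment_shift:
  assumes q: "q \<in> pdomain f"
  shows "upper_partial_moment f (c + \<Delta>) q - upper_partial_moment f c q = \<Delta> * upper_shift_quotient f c \<Delta> q"
proof (cases "\<Delta> = 0")
  case False
  have "upper_shift_quotient f c \<Delta> q
      = (\<integral>x. max (x - (c + \<Delta>)) 0 powr (q - 1) * f x - max (x - c) 0 powr (q - 1) * f x \<partial>lborel) / \<Delta>"
    unfolding upper_shift_quotient_def shift_quotient_def using False
    by (simp add: left_diff_distrib diff_diff_eq)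
  also have "\<dots> = (upper_partial_moment f (c + \<Delta>) q - upper_partial_moment f c q) / \<Delta>"
    unfolding upper_partial_moment_def
    using integrable_upper_kernel[OF q] by (subst Bochner_Integration.integral_diff) auto
  finally show ?thesis using False by simp
qed simp

lemma isCont_upper_shift_quotient:
  assumes c: "isCont f c" and p: "p \<in> interior (pdomain f)"
  shows "isCont (\<lambda>z. upper_shift_quotient f c (fst z) (snd z)) (0, p)"
proof -
  obtain e where e: "0 < e" "1 < p - e" "{p - e..p + e} \<subseteq> pdomain f"
    using interior_pdomain_neighbourhood[OF p] .
  define a b where "a = p - e" and "b = p + e"
  define K where "K = 3 * b * 6 powr b"
  let ?w = "\<lambda>x. K * (\<bar>x - c\<bar> powr min (a - 2) 0 * f x + \<bar>x - c\<bar> powr (b - 1) * f x)"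
  have "eventually (\<lambda>z. z \<in> {-1<..<1} \<times> {a<..<b}) (nhds (0::real, p))"
    using e unfolding a_def b_def by (intro eventually_nhds_in_open open_Times) auto
  then have near: "\<forall>\<^sub>F z in at (0::real, p). \<bar>fst z\<bar> \<le> 1 \<and> a \<le> snd z \<and> snd z \<le> b"
    unfolding eventually_at_filter by eventually_elim auto
  show ?thesis
    unfolding continuous_at upper_shift_quotient_def
  proof (rule tendsto_integral_dominated)
    show "integrable lborel ?w"
      using e unfolding a_def b_def
      by (intro integrable_mult_right Bochner_Integration.integrable_add
          integrable_abs_diff_powr_density_singular[OF c] integrable_abs_diff_powr_density) auto
    show "AE x in lborel. ((\<lambda>z. shift_quotient (snd z) (fst z) (x - c) * f x) \<longlongrightarrow>
        shift_quotient (snd (0, p)) (fst (0::real, p)) (x - c) * f x) (at (0, p))"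
      using AE_lborel_singleton[of c] by eventually_elim (auto intro!: tendsto_mult_right tendsto_shift_quotient)
    from near show "\<forall>\<^sub>F z in at (0, p). AE x in lborel. norm (shift_quotient (snd z) (fst z) (x - c) * f x) \<le> ?w x"
    proof eventually_elim
      case (elim z)
      show ?case
        using AE_lborel_singleton[of c]
      proof eventually_elim
        case (elim x)
        have "\<bar>shift_quotient (snd z) (fst z) (x - c)\<bar> * f x
            \<le> K * (\<bar>x - c\<bar> powr min (a - 2) 0 + \<bar>x - c\<bar> powr (b - 1)) * f x"
          using abs_shift_quotient_le[of a "snd z" b "x - c" "fst z"] \<open>\<bar>fst z\<bar> \<le> 1 \<and> a \<le> snd z \<and> snd z \<le> b\<close>
            elim e density_nonneg[of x] unfolding K_def a_def
          by (intro mult_right_mono) auto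
        then show ?case using density_nonneg[of x] by (simp add: abs_mult algebra_simps)
      qed
    qed
  qed measurable
qed

lemma positive_density_half_density:
  assumes p: "p \<in> interior (pdomain f)" and H: "0 < upper_partial_moment f c p"
  shows "positive_density (half_density f c p)"
proof
  let ?H = "upper_partial_moment f c p"
  note pd = interior_pdomainD(1)[OF p]
  show "half_density f c p \<in> borel_measurable borel"
    unfolding half_density_def by measurable
  show "integrable lborel (half_density f c p)"
    unfolding half_density_def
    using lborel_integrable_real_affine[OF integrable_upper_kernel[OF pd, of c], of 1 c] by simp
  show "(\<integral>y. half_density f c p y \<partial>lborel) = 1"
    unfolding half_density_def
    using lborel_integral_real_affine[of 1 "\<lambda>x. max (x - c) 0 powr (p - 1) * f x" c] H
    by (simp add: upper_partial_moment_def)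
  have "(\<lambda>y. ln y * half_density f c p y) = (\<lambda>y. pos_powr_ln p y * f (c + y) / ?H)"
    unfolding half_density_def pos_powr_ln_def by (auto simp: max_def)
  then show "integrable lborel (\<lambda>y. ln y * half_density f c p y)"
    using lborel_integrable_real_affine[OF integrable_pos_powr_ln_kernel[OF p, of c], of 1 c] by simp
qed (use H density_nonneg in \<open>auto simp: half_density_def\<close>)

end

context nonneg_density
begin

interpretation reflected: nonneg_density "\<lambda>x. f (- x)"
  by (rule nonneg_density_reflect)

lemma lower_partial_moment_mono:
  "q \<in> pdomain f \<Longrightarrow> \<nu> \<le> \<nu>' \<Longrightarrow> lower_partial_moment f \<nu> q \<le> lower_partial_moment f \<nu>' q"
  unfolding lower_partial_moment_reflect
  by (rule reflected.upper_partial_moment_antimono) (auto simp: pdomain_reflect)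

lemma isCont_lower_partial_moment:
  "q \<in> pdomain f \<Longrightarrow> isCont (\<lambda>\<nu>. lower_partial_moment f \<nu> q) \<nu>0"
  unfolding lower_partial_moment_reflect
  by (intro continuous_intros isCont_o2[OF _ reflected.isCont_upper_partial_moment]) (auto simp: pdomain_reflect)

lemma lower_partial_moment_at_bot:
  "q \<in> pdomain f \<Longrightarrow> ((\<lambda>\<nu>. lower_partial_moment f \<nu> q) \<longlongrightarrow> 0) at_bot"
  unfolding lower_partial_moment_reflect
  using filterlim_compose[OF reflected.upper_partial_moment_at_top filterlim_uminus_at_top_at_bot]
  by (simp add: pdomain_reflect)

lemma lower_partial_moment_continuous_order:
  "e \<in> pdomain f \<Longrightarrow>
    ((\<lambda>q. lower_partial_moment f \<nu> q) \<longlongrightarrow> lower_partial_moment f \<nu> e) (at e within pdomain f)"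
  unfolding lower_partial_moment_reflect
  using reflected.upper_partial_moment_continuous_order by (simp add: pdomain_reflect)

lemma lower_partial_moment_has_derivative_order:
  "p \<in> interior (pdomain f) \<Longrightarrow>
    ((\<lambda>q. lower_partial_moment f c q) has_real_derivative (\<integral>x. pos_powr_ln p (x + c) * f (- x) \<partial>lborel)) (at p)"
  unfolding lower_partial_moment_reflect
  using reflected.upper_partial_moment_has_derivative_order[of p "- c"] by (simp add: pdomain_reflect)

lemma moment_balance_antimono:
  "q \<in> pdomain f \<Longrightarrow> \<nu> \<le> \<nu>' \<Longrightarrow> moment_balance f \<nu>' q \<le> moment_balance f \<nu> q"
  unfolding moment_balance_def
  using upper_partial_moment_antimono lower_partial_moment_mono by (smt (verit))

lemma isCont_moment_balance: "q \<in> pdomain f \<Longrightarrow> isCont (\<lambda>\<nu>. moment_balance f \<nu> q) \<nu>0"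
  unfolding moment_balance_def
  by (intro continuous_intros isCont_upper_partial_moment isCont_lower_partial_moment)

lemma moment_balance_continuous_order:
  "e \<in> pdomain f \<Longrightarrow> ((\<lambda>q. moment_balance f \<nu> q) \<longlongrightarrow> moment_balance f \<nu> e) (at e within pdomain f)"
  unfolding moment_balance_def
  by (intro tendsto_intros upper_partial_moment_continuous_order lower_partial_moment_continuous_order)

lemma moment_balance_has_derivative_order:
  "p \<in> interior (pdomain f) \<Longrightarrow>
    ((\<lambda>q. moment_balance f c q) has_real_derivative balance_order_derivative f c p) (at p)"
  unfolding moment_balance_def balance_order_derivative_def
  by (intro derivative_intros upper_partial_moment_has_derivative_order lower_partial_moment_has_derivative_order)

lemma moment_balance_shift:
  assumes "q \<in> pdomain f"
  shows "moment_balance f (c + \<Delta>) q - moment_balance f c q = \<Delta> * balance_shift_quotient f c \<Delta> q"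
  using upper_partial_moment_shift[OF assms, of c \<Delta>]
    reflected.upper_partial_moment_shift[of q "- c" "- \<Delta>"] assms
  unfolding moment_balance_def balance_shift_quotient_def lower_partial_moment_reflect
  by (simp add: pdomain_reflect algebra_simps)

lemma isCont_balance_shift_quotient:
  assumes c: "isCont f c" and p: "p \<in> interior (pdomain f)"
  shows "isCont (\<lambda>z. balance_shift_quotient f c (fst z) (snd z)) (0, p)"
proof -
  have "isCont (\<lambda>x. f (- x)) (- c)"
    using isCont_o2[where f = uminus and a = "- c" and g = f] c by simp
  then have "isCont (\<lambda>z. upper_shift_quotient (\<lambda>x. f (- x)) (- c) (fst z) (snd z)) (0, p)"
    using reflected.isCont_upper_shift_quotient[of "- c" p] p by (simp add: pdomain_reflect)
  moreover have "isCont (\<lambda>z. (- fst z, snd z)) (0::real, p)"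
    by (intro continuous_intros)
  ultimately have "isCont (\<lambda>z. upper_shift_quotient (\<lambda>x. f (- x)) (- c) (- fst z) (snd z)) (0, p)"
    using isCont_o2[where f = "\<lambda>z. (- fst z, snd z)" and a = "(0, p)"
        and g = "\<lambda>z. upper_shift_quotient (\<lambda>x. f (- x)) (- c) (fst z) (snd z)"]
    by simp
  then show ?thesis
    unfolding balance_shift_quotient_def
    by (intro continuous_intros isCont_upper_shift_quotient[OF c p])
qed

end

section \<open>Densities supported on an interval\<close>

locale interval_density = nonneg_density +
  fixes L R :: ereal
  assumes support_nonempty: "L < R"
    and density_outside: "\<And>x. \<not> (L < ereal x \<and> ereal x < R) \<Longrightarrow> f x = 0"
    and closure_support: "closure {x. 0 < f x} = {x. L \<le> ereal x \<and> ereal x \<le> R}"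
    and continuous_density: "continuous_on {x. L < ereal x \<and> ereal x < R} f"
begin

interpretation reflected: nonneg_density "\<lambda>x. f (- x)"
  by (rule nonneg_density_reflect)

lemma isCont_density: "L < ereal x \<Longrightarrow> ereal x < R \<Longrightarrow> isCont f x"
  using continuous_density open_ereal_between continuous_on_eq_continuous_at by blast

lemma density_bounded_below_near:
  assumes "a < x0" "x0 < b" "L < ereal x0" "ereal x0 < R"
  shows "\<exists>\<alpha> \<beta> c. a < \<alpha> \<and> \<alpha> < \<beta> \<and> \<beta> < b \<and> 0 < c \<and> (\<forall>x\<in>{\<alpha>..\<beta>}. c \<le> f x)"
proof -
  define U where "U = {x. L < ereal x \<and> ereal x < R} \<inter> {a<..<b}"
  have U: "open U" "x0 \<in> U" unfolding U_def using assms open_ereal_between by auto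
  have "U \<subseteq> closure {x. 0 < f x}" unfolding closure_support U_def by (auto simp: less_imp_le)
  then obtain x1 where x1: "x1 \<in> U" "0 < f x1"
    using U open_Int_closure_eq_empty[OF U(1), of "{x. 0 < f x}"] by auto
  have "isCont f x1" using x1(1) isCont_density unfolding U_def by auto
  then obtain d where d: "0 < d" "\<And>x. dist x x1 < d \<Longrightarrow> dist (f x) (f x1) < f x1 / 2"
    using x1(2) unfolding continuous_at_eps_delta by (meson half_gt_zero)
  obtain e where e: "0 < e" "ball x1 e \<subseteq> U" using open_contains_ball U(1) x1(1) by blast
  define r where "r = min d e / 2"
  have r: "0 < r" "r < d" "r < e" using d e unfolding r_def by auto
  have near: "f x1 / 2 \<le> f x \<and> x \<in> U" if "x \<in> {x1 - r..x1 + r}" for x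
  proof -
    have x: "dist x x1 < d" "dist x x1 < e" using that r by (auto simp: dist_real_def)
    then have "\<bar>f x - f x1\<bar> < f x1 / 2" using d(2) by (simp add: dist_real_def)
    then have "f x1 / 2 \<le> f x" by arith
    moreover have "x \<in> U" using x e(2) by (auto simp: dist_commute)
    ultimately show ?thesis by simp
  qed
  have "a < x1 - r" "x1 + r < b" using near[of "x1 - r"] near[of "x1 + r"] r(1) unfolding U_def by auto
  then show ?thesis using near r(1) x1(2) by (intro exI[of _ "x1 - r"] exI[of _ "x1 + r"] exI[of _ "f x1 / 2"]) auto
qed

lemma upper_partial_moment_pos_support:
  assumes "q \<in> pdomain f" "\<nu> < x0" "L < ereal x0" "ereal x0 < R"
  shows "0 < upper_partial_moment f \<nu> q"
proof -
  obtain \<alpha> \<beta> c where "\<nu> < \<alpha>" "\<alpha> < \<beta>" "0 < c" "\<And>x. x \<in> {\<alpha>..\<beta>} \<Longrightarrow> c \<le> f x"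
    using density_bounded_below_near[of \<nu> x0 "x0 + 1"] assms by force
  then show ?thesis using integrable_upper_kernel[OF assms(1)] by (intro upper_partial_moment_pos)
qed

lemma lower_partial_moment_pos_support:
  assumes "q \<in> pdomain f" "x0 < \<nu>" "L < ereal x0" "ereal x0 < R"
  shows "0 < lower_partial_moment f \<nu> q"
proof -
  obtain \<alpha> \<beta> c where "\<alpha> < \<beta>" "\<beta> < \<nu>" "0 < c" "\<And>x. x \<in> {\<alpha>..\<beta>} \<Longrightarrow> c \<le> f x"
    using density_bounded_below_near[of "x0 - 1" x0 \<nu>] assms by force
  then show ?thesis
    unfolding lower_partial_moment_reflect using assms(1)
    by (intro reflected.upper_partial_moment_pos[of _ _ "- \<beta>" "- \<alpha>" c] reflected.integrable_upper_kernel)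
      (auto simp: pdomain_reflect)
qed

lemma moment_balance_strict_antimono:
  assumes q: "q \<in> pdomain f" and "\<nu> < x0" "x0 < \<nu>'" "L < ereal x0" "ereal x0 < R"
  shows "moment_balance f \<nu>' q < moment_balance f \<nu> q"
proof -
  obtain \<alpha> \<beta> c where "\<nu> < \<alpha>" "\<alpha> < \<beta>" "\<beta> < \<nu>'" "0 < c" "\<And>x. x \<in> {\<alpha>..\<beta>} \<Longrightarrow> c \<le> f x"
    using density_bounded_below_near[of \<nu> x0 \<nu>'] assms by force
  then have "upper_partial_moment f \<nu>' q < upper_partial_moment f \<nu> q"
    using upper_partial_moment_strict_antimono[OF q, of \<nu> \<alpha> \<beta> \<nu>' c] by auto
  moreover have "lower_partial_moment f \<nu> q \<le> lower_partial_moment f \<nu>' q"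
    using q assms by (intro lower_partial_moment_mono) auto
  ultimately show ?thesis unfolding moment_balance_def by linarith
qed

lemma moment_balance_root_in_support:
  assumes q: "q \<in> pdomain f" and r: "moment_balance f r q = 0"
  shows "L < ereal r" "ereal r < R"
proof -
  obtain x0 where x0: "L < ereal x0" "ereal x0 < R" using ereal_dense2[OF support_nonempty] by auto
  show "L < ereal r"
  proof (rule ccontr)
    assume "\<not> L < ereal r"
    then have rL: "ereal r \<le> L" by (simp add: not_less)
    have "lower_partial_moment f r q = 0"
    proof (rule lower_partial_moment_eq_0)
      fix x assume "x < r"
      then have "ereal x < L" using less_le_trans[of "ereal x" "ereal r" L] rL by simp
      then show "f x = 0" by (intro density_outside) auto
    qed
    moreover have "r < x0" using le_less_trans[OF rL x0(1)] by simp
    ultimately show False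
      using upper_partial_moment_pos_support[OF q _ x0, of r] r unfolding moment_balance_def by simp
  qed
  show "ereal r < R"
  proof (rule ccontr)
    assume "\<not> ereal r < R"
    then have rR: "R \<le> ereal r" by (simp add: not_less)
    have "upper_partial_moment f r q = 0"
    proof (rule upper_partial_moment_eq_0)
      fix x assume "r < x"
      then have "R < ereal x" using le_less_trans[of R "ereal r" "ereal x"] rR by simp
      then show "f x = 0" by (intro density_outside) auto
    qed
    moreover have "x0 < r" using less_le_trans[OF x0(2) rR] by simp
    ultimately show False
      using lower_partial_moment_pos_support[OF q _ x0, of r] r unfolding moment_balance_def by simp
  qed
qed

lemma moment_balance_root_exists:
  assumes q: "q \<in> pdomain f"
  obtains r where "moment_balance f r q = 0"
proof -
  obtain x0 where x0: "L < ereal x0" "ereal x0 < R" using ereal_dense2[OF support_nonempty] by auto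
  have pos: "0 < upper_partial_moment f (x0 - 1) q" "0 < lower_partial_moment f (x0 + 1) q"
    using upper_partial_moment_pos_support[OF q _ x0] lower_partial_moment_pos_support[OF q _ x0] by auto
  have "\<forall>\<^sub>F \<nu> in at_bot. lower_partial_moment f \<nu> q < upper_partial_moment f (x0 - 1) q"
    using order_tendstoD(2)[OF lower_partial_moment_at_bot[OF q] pos(1)] .
  then obtain N where N: "\<And>\<nu>. \<nu> \<le> N \<Longrightarrow> lower_partial_moment f \<nu> q < upper_partial_moment f (x0 - 1) q"
    unfolding eventually_at_bot_linorder by blast
  define a where "a = min N (x0 - 1)"
  have a: "a \<le> x0 - 1" "lower_partial_moment f a q < upper_partial_moment f (x0 - 1) q"
    using N[of a] unfolding a_def by auto
  have "\<forall>\<^sub>F \<nu> in at_top. upper_partial_moment f \<nu> q < lower_partial_moment f (x0 + 1) q"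
    using order_tendstoD(2)[OF upper_partial_moment_at_top[OF q] pos(2)] .
  then obtain M where M: "\<And>\<nu>. M \<le> \<nu> \<Longrightarrow> upper_partial_moment f \<nu> q < lower_partial_moment f (x0 + 1) q"
    unfolding eventually_at_top_linorder by blast
  define b where "b = max M (x0 + 1)"
  have b: "x0 + 1 \<le> b" "upper_partial_moment f b q < lower_partial_moment f (x0 + 1) q"
    using M[of b] unfolding b_def by auto
  have "0 \<le> moment_balance f a q"
    using a upper_partial_moment_antimono[OF q a(1)] unfolding moment_balance_def by linarith
  moreover have "moment_balance f b q \<le> 0"
    using b lower_partial_moment_mono[OF q b(1)] unfolding moment_balance_def by linarith
  moreover have "continuous_on {a..b} (\<lambda>\<nu>. moment_balance f \<nu> q)"
    using isCont_moment_balance[OF q] by (intro continuous_at_imp_continuous_on) auto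
  moreover have "a \<le> b" using a(1) b(1) by linarith
  ultimately show ?thesis using IVT2'[of "\<lambda>\<nu>. moment_balance f \<nu> q" b 0 a] that by blast
qed

lemma moment_balance_root_unique:
  assumes q: "q \<in> pdomain f" and r: "moment_balance f r q = 0" "moment_balance f r' q = 0"
  shows "r = r'"
proof -
  have False if "moment_balance f a q = 0" "moment_balance f b q = 0" "a < b" for a b
  proof -
    have m: "a < (a + b) / 2" "(a + b) / 2 < b" using that(3) by auto
    have "L < ereal ((a + b) / 2)"
      using less_trans[OF moment_balance_root_in_support(1)[OF q that(1)], of "ereal ((a + b) / 2)"] m by simp
    moreover have "ereal ((a + b) / 2) < R"
      using less_trans[OF _ moment_balance_root_in_support(2)[OF q that(2)], of "ereal ((a + b) / 2)"] m by simp
    ultimately show False using moment_balance_strict_antimono[OF q m] that by simp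
  qed
  then show ?thesis using r by (cases r r' rule: linorder_cases) auto
qed

lemma moment_balance_pmean:
  assumes q: "q \<in> pdomain f"
  shows "moment_balance f (pmean f q) q = 0"
proof -
  obtain r where "moment_balance f r q = 0" using moment_balance_root_exists[OF q] .
  then have "\<exists>!\<nu>. moment_balance f \<nu> q = 0" using moment_balance_root_unique[OF q] by blast
  then show ?thesis unfolding pmean_eq_The_moment_balance by (rule theI')
qed

lemma pmean_in_support: "q \<in> pdomain f \<Longrightarrow> L < ereal (pmean f q) \<and> ereal (pmean f q) < R"
  using moment_balance_root_in_support moment_balance_pmean by blast

lemma pmean_continuous_on: "continuous_on (pdomain f) (pmean f)"
  unfolding continuous_on_def
proof (intro ballI tendstoI)
  fix e \<epsilon> :: real assume e: "e \<in> pdomain f" and \<epsilon>: "0 < \<epsilon>"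
  define m where "m = pmean f e"
  have m: "L < ereal m" "ereal m < R" "moment_balance f m e = 0"
    using pmean_in_support[OF e] moment_balance_pmean[OF e] unfolding m_def by auto
  obtain \<delta> where \<delta>: "0 < \<delta>" "ball m \<delta> \<subseteq> {x. L < ereal x \<and> ereal x < R}"
    using open_contains_ball[THEN iffD1, OF open_ereal_between] m(1,2) by blast
  define h where "h = min \<epsilon> \<delta> / 2"
  have h: "0 < h" "h < \<epsilon>" "h < \<delta>" using \<epsilon> \<delta>(1) unfolding h_def by auto
  have "L < ereal x \<and> ereal x < R" if "x \<in> {m - h, m + h}" for x
    using that h \<delta>(2) by (auto simp: dist_real_def subset_iff)
  then have "0 < moment_balance f (m - \<epsilon>) e" "moment_balance f (m + \<epsilon>) e < 0"
    using moment_balance_strict_antimono[OF e, of "m - \<epsilon>" "m - h" m]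
      moment_balance_strict_antimono[OF e, of m "m + h" "m + \<epsilon>"] m(3) h by auto
  then have "\<forall>\<^sub>F q in at e within pdomain f. 0 < moment_balance f (m - \<epsilon>) q"
    "\<forall>\<^sub>F q in at e within pdomain f. moment_balance f (m + \<epsilon>) q < 0"
    using order_tendstoD[OF moment_balance_continuous_order[OF e]] by auto
  with eventually_at_within_self[of "pdomain f" e]
  show "\<forall>\<^sub>F q in at e within pdomain f. dist (pmean f q) (pmean f e) < \<epsilon>"
  proof eventually_elim
    case (elim q)
    have "m - \<epsilon> < pmean f q"
    proof (rule ccontr)
      assume "\<not> m - \<epsilon> < pmean f q"
      then have "moment_balance f (m - \<epsilon>) q \<le> moment_balance f (pmean f q) q"
        by (intro moment_balance_antimono[OF elim(1)]) simp
      then show False using elim(2) moment_balance_pmean[OF elim(1)] by simp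
    qed
    moreover have "pmean f q < m + \<epsilon>"
    proof (rule ccontr)
      assume "\<not> pmean f q < m + \<epsilon>"
      then have "moment_balance f (pmean f q) q \<le> moment_balance f (m + \<epsilon>) q"
        by (intro moment_balance_antimono[OF elim(1)]) simp
      then show False using elim(3) moment_balance_pmean[OF elim(1)] by simp
    qed
    ultimately show ?case unfolding m_def dist_real_def by auto
  qed
qed

lemma balance_shift_quotient_0_neg:
  assumes q: "q \<in> pdomain f" "1 < q" and c: "L < ereal c" "ereal c < R"
  shows "balance_shift_quotient f c 0 q < 0"
proof -
  obtain x0 where x0: "ereal c < ereal x0" "ereal x0 < R" using ereal_dense2[OF c(2)] by auto
  have "\<exists>\<alpha> \<beta> k. c < \<alpha> \<and> \<alpha> < \<beta> \<and> \<beta> < x0 + 1 \<and> 0 < k \<and> (\<forall>x\<in>{\<alpha>..\<beta>}. k \<le> f x)"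
    using x0 c(1) by (intro density_bounded_below_near) (auto intro: less_trans)
  then obtain \<alpha> \<beta> k where "c < \<alpha>" "\<alpha> < \<beta>" "0 < k" "\<And>x. x \<in> {\<alpha>..\<beta>} \<Longrightarrow> k \<le> f x"
    by blast
  moreover have "integrable lborel (\<lambda>x. max (x - c) 0 powr (q - 1 - 1) * f x)"
    using integrable_upper_kernel_singular[OF isCont_density[OF c] q] by simp
  ultimately have "0 < upper_partial_moment f c (q - 1)"
    using upper_partial_moment_pos[where \<nu> = c and q = "q - 1" and \<alpha> = \<alpha> and \<beta> = \<beta> and c = k] by simp
  then have "0 < (q - 1) * upper_partial_moment f c (q - 1)" using q(2) by simp
  moreover have "0 \<le> (q - 1) * upper_partial_moment (\<lambda>x. f (- x)) (- c) (q - 1)"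
    using q(2) reflected.upper_partial_moment_nonneg by simp
  ultimately show ?thesis
    unfolding balance_shift_quotient_def minus_zero upper_shift_quotient_0 by linarith
qed

lemma pmean_has_real_derivative:
  assumes p: "p \<in> interior (pdomain f)"
  shows "(pmean f has_real_derivative
      - balance_order_derivative f (pmean f p) p / balance_shift_quotient f (pmean f p) 0 p) (at p)"
proof (rule has_real_derivative_implicit[where G = "moment_balance f" and Q = "balance_shift_quotient f (pmean f p)"])
  have dom: "\<forall>\<^sub>F q in nhds p. q \<in> pdomain f" using eventually_nhds_in_nhd[OF p] .
  note pd = interior_pdomainD[OF p]
  show "\<forall>\<^sub>F q in nhds p. moment_balance f (pmean f q) q = 0"
    using dom by eventually_elim (rule moment_balance_pmean)
  show "isCont (pmean f) p"
    using continuous_on_interior[OF pmean_continuous_on p] .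
  show "((\<lambda>q. moment_balance f (pmean f p) q) has_real_derivative balance_order_derivative f (pmean f p) p) (at p)"
    using moment_balance_has_derivative_order[OF p] .
  show "\<forall>\<^sub>F q in nhds p. \<forall>\<Delta>. moment_balance f (pmean f p + \<Delta>) q - moment_balance f (pmean f p) q
      = \<Delta> * balance_shift_quotient f (pmean f p) \<Delta> q"
    using dom by eventually_elim (simp add: moment_balance_shift)
  show "isCont (\<lambda>z. balance_shift_quotient f (pmean f p) (fst z) (snd z)) (0, p)"
    using pmean_in_support[OF pd(1)] by (intro isCont_balance_shift_quotient isCont_density p) auto
  have "balance_shift_quotient f (pmean f p) 0 p < 0"
    using pmean_in_support[OF pd(1)] by (intro balance_shift_quotient_0_neg pd) auto
  then show "balance_shift_quotient f (pmean f p) 0 p \<noteq> 0" by simp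
qed

lemma Hp_eq_lower_partial_moment: "Hp f L p = lower_partial_moment f (pmean f p) p"
proof -
  let ?\<nu> = "pmean f p"
  have "(\<lambda>y. indicator {y. 0 < y \<and> ereal y < ereal ?\<nu> - L} y * y powr (p - 1) * f (?\<nu> - y))
      = (\<lambda>y. max y 0 powr (p - 1) * f (?\<nu> - y))"
  proof
    fix y
    show "indicator {y. 0 < y \<and> ereal y < ereal ?\<nu> - L} y * y powr (p - 1) * f (?\<nu> - y)
        = max y 0 powr (p - 1) * f (?\<nu> - y)"
      using density_outside[of "?\<nu> - y"] by (auto simp: indicator_def ereal_less_minus_iff)
  qed
  then have "Hp f L p = (\<integral>y. max y 0 powr (p - 1) * f (?\<nu> - y) \<partial>lborel)"
    unfolding Hp_def by simp
  also have "\<dots> = lower_partial_moment f ?\<nu> p"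
    using lborel_integral_real_affine[of "-1" "\<lambda>x. max (?\<nu> - x) 0 powr (p - 1) * f x" ?\<nu>]
    unfolding lower_partial_moment_def by simp
  finally show ?thesis .
qed

lemma dens_minus_eq_half_density: "dens_minus f L p = half_density (\<lambda>x. f (- x)) (- pmean f p) p"
proof
  fix y
  show "dens_minus f L p y = half_density (\<lambda>x. f (- x)) (- pmean f p) p y"
    using density_outside[of "pmean f p - y"]
    unfolding dens_minus_def half_density_def Hp_eq_lower_partial_moment lower_partial_moment_reflect
    by (auto simp: indicator_def ereal_less_minus_iff)
qed

lemma dens_plus_eq_half_density:
  assumes "p \<in> pdomain f"
  shows "dens_plus f L R p = half_density f (pmean f p) p"
proof
  fix y
  have "Hp f L p = upper_partial_moment f (pmean f p) p"
    using moment_balance_pmean[OF assms] unfolding Hp_eq_lower_partial_moment moment_balance_def by simp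
  then show "dens_plus f L R p y = half_density f (pmean f p) p y"
    using density_outside[of "pmean f p + y"]
    unfolding dens_plus_def half_density_def by (auto simp: indicator_def ereal_less_minus_iff')
qed

lemma balance_order_derivative_pos:
  assumes p: "p \<in> interior (pdomain f)"
    and dom: "strict_stoch_dom (dens_plus f L R p) (dens_minus f L p)"
  shows "0 < balance_order_derivative f (pmean f p) p"
proof -
  define \<nu> H where "\<nu> = pmean f p" and "H = upper_partial_moment f \<nu> p"
  note pd = interior_pdomainD(1)[OF p]
  have \<nu>: "L < ereal \<nu>" "ereal \<nu> < R" using pmean_in_support[OF pd] unfolding \<nu>_def by auto
  have H_lower: "upper_partial_moment (\<lambda>x. f (- x)) (- \<nu>) p = H"
    using moment_balance_pmean[OF pd]
    unfolding H_def \<nu>_def moment_balance_def lower_partial_moment_reflect by simp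
  obtain x0 where x0: "ereal \<nu> < ereal x0" "ereal x0 < R" using ereal_dense2[OF \<nu>(2)] by auto
  have H: "0 < H"
    using upper_partial_moment_pos_support[OF pd, of \<nu> x0] x0 less_trans[OF \<nu>(1) x0(1)] unfolding H_def
    by simp
  have "positive_density (dens_plus f L R p)"
    unfolding dens_plus_eq_half_density[OF pd] using H p unfolding H_def \<nu>_def
    by (intro positive_density_half_density)
  moreover have "positive_density (dens_minus f L p)"
    unfolding dens_minus_eq_half_density using H H_lower p unfolding \<nu>_def
    by (intro reflected.positive_density_half_density) (auto simp: pdomain_reflect)
  ultimately have "(\<integral>y. ln y * dens_minus f L p y \<partial>lborel) < (\<integral>y. ln y * dens_plus f L R p y \<partial>lborel)"
    using dom by (rule ln_expectation_less_if_strict_stoch_dom)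
  then have "(\<integral>x. pos_powr_ln p (x + \<nu>) * f (- x) \<partial>lborel) / H < (\<integral>x. pos_powr_ln p (x - \<nu>) * f x \<partial>lborel) / H"
    unfolding dens_plus_eq_half_density[OF pd] dens_minus_eq_half_density ln_expectation_half_density
    using H_lower unfolding H_def \<nu>_def by simp
  then show ?thesis
    using H unfolding balance_order_derivative_def \<nu>_def by (simp add: divide_less_cancel)
qed

lemma pmean_has_positive_derivative:
  assumes "p \<in> interior (pdomain f)" "strict_stoch_dom (dens_plus f L R p) (dens_minus f L p)"
  shows "\<exists>d>0. (pmean f has_real_derivative d) (at p)"
proof -
  note pd = interior_pdomainD[OF assms(1)]
  have "balance_shift_quotient f (pmean f p) 0 p < 0"
    using pmean_in_support[OF pd(1)] by (intro balance_shift_quotient_0_neg pd) auto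
  then have "0 < - balance_order_derivative f (pmean f p) p / balance_shift_quotient f (pmean f p) 0 p"
    using balance_order_derivative_pos[OF assms] by (simp add: divide_pos_neg)
  then show ?thesis using pmean_has_real_derivative[OF assms(1)] by blast
qed

lemma pmean_strict_mono_on:
  assumes "\<And>p. p \<in> interior (pdomain f) \<Longrightarrow> strict_stoch_dom (dens_plus f L R p) (dens_minus f L p)"
  shows "strict_mono_on (pdomain f) (pmean f)"
  using is_interval_pdomain pmean_continuous_on
  by (rule strict_mono_on_if_has_real_derivative_pos) (intro pmean_has_positive_derivative assms)

end

theorem theorem1:
  fixes f :: "real \<Rightarrow> real" and L R :: ereal
  assumes "L < R"
    and "f \<in> borel_measurable borel"
    and "\<And>x. f x \<ge> 0"
    and "integrable lborel f"
    and "(\<integral>x. f x \<partial>lborel) = 1"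
    and "\<And>x. \<not> (L < ereal x \<and> ereal x < R) \<Longrightarrow> f x = 0"
    and "closure {x. f x > 0} = {x. L \<le> ereal x \<and> ereal x \<le> R}"
    and "continuous_on {x. L < ereal x \<and> ereal x < R} f"
  shows "(\<forall>p \<in> interior (pdomain f).
            strict_stoch_dom (dens_plus f L R p) (dens_minus f L p)
            \<longrightarrow> (\<exists>d > 0. (pmean f has_real_derivative d) (at p)))
       \<and> ((interior (pdomain f) \<noteq> {} \<and>
            (\<forall>p \<in> interior (pdomain f). strict_stoch_dom (dens_plus f L R p) (dens_minus f L p)))
            \<longrightarrow> truly_pos_skewed f)"
proof -
  interpret interval_density f L R
    using assms by unfold_locales auto
  show ?thesis
    using pmean_has_positive_derivative pmean_strict_mono_on unfolding truly_pos_skewed_def by blast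
qed

end
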